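(* Let $W_1,W_2\subset\mathbb{C}^n$ be germs at $0$ of complex analytic curves, and write their tangent cones as $LD(W_1)=\bigcup_{j=1}^s m_j$ and $LD(W_2)=\bigcup_{j=1}^t l_j$, where $m_1,\dots,m_s$ are pairwise distinct complex lines through $0$ and $l_1,\dots,l_t$ are pairwise distinct complex lines through $0$. Suppose that there is a bi-Lipschitz homeomorphism germ $h:(\mathbb{C}^n,0)\to(\mathbb{C}^n,0)$ with $h(W_1)=W_2$. Then $s=t$.
   Context: Identify $\mathbb{C}^n$ with $\mathbb{R}^{2n}$. For a set-germ $A$ at $0$ with $0\in\overline A$, $D(A)=\{a\in S^{2n-1}:\exists\, x_i\in A\setminus\{0\},\ x_i\to0,\ x_i/\|x_i\|\to a\}$ and $LD(A)=\{ta:a\in D(A),t\ge0\}$; for a complex analytic curve this tangent cone is a finite union of complex lines through $0$. A bi-Lipschitz homeomorphism germ is a homeomorphism germ $h$ with $h(0)=0$ and constants $0<K_1\le K_2$ with $K_1\|x-y\|\le\|h(x)-h(y)\|\le K_2\|x-y\|$ near $0$. *)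

theory Defs
  imports "HOL-Analysis.Analysis"
begin

text \<open>We identify C^n with the type complex^'n (Euclidean norm = norm of R^2n).\<close>

definition holomorphic_several :: "(complex^'n \<Rightarrow> complex) \<Rightarrow> (complex^'n) set \<Rightarrow> bool" where
  "holomorphic_several f U \<longleftrightarrow> (\<forall>z\<in>U. \<exists>f'. (f has_derivative f') (at z) \<and>
      (\<forall>c v. f' (c *s v) = c * f' v))"

definition analytic_germ_at0 :: "(complex^'n) set \<Rightarrow> bool" where
  "analytic_germ_at0 W \<longleftrightarrow> (\<exists>U F. open U \<and> 0 \<in> U \<and> finite F \<and>
      (\<forall>f\<in>F. holomorphic_several f U) \<and> W \<inter> U = {z\<in>U. \<forall>f\<in>F. f z = 0})"

definition complex_curve_manifold :: "(complex^'n) set \<Rightarrow> bool" where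
  "complex_curve_manifold M \<longleftrightarrow> (\<forall>p\<in>M. \<exists>r>0. \<exists>e>0. \<exists>g g'.
      (\<forall>i. (\<lambda>z. g z $ i) holomorphic_on ball 0 e) \<and> (\<exists>i. deriv (\<lambda>z. g z $ i) 0 \<noteq> 0) \<and>
      g 0 = p \<and> homeomorphism (ball 0 e) (M \<inter> ball p r) g g')"

text \<open>Germ at 0 of a complex analytic curve: an analytic germ containing 0, with 0 non-isolated,
  which off the origin (after shrinking) is a one-dimensional complex submanifold
  (curve germs have isolated singularities).\<close>
definition analytic_curve_germ_at0 :: "(complex^'n) set \<Rightarrow> bool" where
  "analytic_curve_germ_at0 W \<longleftrightarrow> analytic_germ_at0 W \<and> 0 \<in> W \<and> 0 \<in> closure (W - {0}) \<and>
      (\<exists>r>0. complex_curve_manifold ((W \<inter> ball 0 r) - {0}))"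

definition tangent_directions :: "('a::real_normed_vector) set \<Rightarrow> 'a set" where
  "tangent_directions A = {a. norm a = 1 \<and> (\<exists>x::nat \<Rightarrow> 'a. (\<forall>i. x i \<in> A - {0}) \<and>
      x \<longlonglongrightarrow> 0 \<and> (\<lambda>i. x i /\<^sub>R norm (x i)) \<longlonglongrightarrow> a)}"

definition tangent_cone :: "('a::real_normed_vector) set \<Rightarrow> 'a set" where
  "tangent_cone A = {t *\<^sub>R a | t a. a \<in> tangent_directions A \<and> t \<ge> 0}"

definition complex_line :: "(complex^'n) set \<Rightarrow> bool" where
  "complex_line m \<longleftrightarrow> (\<exists>v. v \<noteq> 0 \<and> m = {c *s v | c. True})"

definition bilipschitz_germ_map :: "(complex^'n \<Rightarrow> complex^'n) \<Rightarrow> (complex^'n) set \<Rightarrow> (complex^'n) set \<Rightarrow> bool" where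
  "bilipschitz_germ_map h U V \<longleftrightarrow> open U \<and> open V \<and> 0 \<in> U \<and> h 0 = 0 \<and>
      (\<exists>h'. homeomorphism U V h h') \<and>
      (\<exists>K1 K2. 0 < K1 \<and> K1 \<le> K2 \<and> (\<forall>x\<in>U. \<forall>y\<in>U.
          K1 * dist x y \<le> dist (h x) (h y) \<and> dist (h x) (h y) \<le> K2 * dist x y))"

end

theory Submission
  imports Defs "HOL-Complex_Analysis.Conformal_Mappings"
begin

text \<open>
  Near the origin an analytic curve lies in thin cones around its tangent lines, and conversely
  every point of a tangent line m is close, relative to its norm, to the curve: the projection
  onto m of the branch of the curve tangent to m covers a punctured disc, by the open mapping
  theorem and the maximum principle. A bi-Lipschitz h sends points of W1 tangent to m to points
  whose directions accumulate on tangent lines of W2. Following the points of W1 close to the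
  connected punctured disc of m, the tangent line of W2 they are sent near is locally constant,
  hence unique; so h induces a map from the tangent lines of W1 to those of W2, which is
  injective because the same construction for the inverse of h undoes it. By symmetry the
  two sets of lines have the same cardinality.
\<close>

section \<open>Complex lines in \<open>\<complex>\<^sup>n\<close>\<close>

definition cinner :: "complex^'n \<Rightarrow> complex^'n \<Rightarrow> complex" where
  "cinner x a = (\<Sum>i\<in>UNIV. x$i * cnj (a$i))"

lemma power2_norm_vec_complex: "(norm (x::complex^'n))\<^sup>2 = (\<Sum>i\<in>UNIV. (cmod (x$i))\<^sup>2)"
  unfolding norm_vec_def L2_set_def by (simp add: sum_nonneg)

lemma norm_cinner_le: "cmod (cinner x a) \<le> norm x * norm a"
proof -
  have "cmod (cinner x a) \<le> (\<Sum>i\<in>UNIV. cmod (x$i * cnj (a$i)))"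
    unfolding cinner_def by (rule norm_sum)
  also have "\<dots> = (\<Sum>i\<in>UNIV. \<bar>cmod (x$i)\<bar> * \<bar>cmod (a$i)\<bar>)"
    by (simp add: norm_mult)
  also have "\<dots> \<le> L2_set (\<lambda>i. cmod (x$i)) UNIV * L2_set (\<lambda>i. cmod (a$i)) UNIV"
    by (rule L2_set_mult_ineq)
  finally show ?thesis by (simp add: norm_vec_def)
qed

lemma norm_vector_smult: "norm (c *s (v::complex^'n)) = cmod c * norm v"
  by (simp add: scalar_mult_eq_scaleR norm_vec_def L2_set_def norm_mult power_mult_distrib
      sum_distrib_left[symmetric] real_sqrt_mult)

lemma cinner_diff_left: "cinner (x - y) a = cinner x a - cinner y a"
  unfolding cinner_def by (simp add: algebra_simps sum_subtractf)

lemma cinner_smult_left: "cinner (c *s x) a = c * cinner x a"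
  unfolding cinner_def by (simp add: algebra_simps sum_distrib_left)

lemma cinner_self: "cinner a a = complex_of_real ((norm a)\<^sup>2)"
proof -
  have "cinner a a = (\<Sum>i\<in>UNIV. complex_of_real ((cmod (a$i))\<^sup>2))"
    unfolding cinner_def by (intro sum.cong refl) (simp add: complex_norm_square[symmetric])
  also have "\<dots> = complex_of_real ((norm a)\<^sup>2)" by (simp add: power2_norm_vec_complex)
  finally show ?thesis .
qed

lemma power2_norm_diff_cinner:
  "(norm (x - p))\<^sup>2 = (norm x)\<^sup>2 - 2 * Re (cinner x p) + (norm p)\<^sup>2"
proof -
  have c: "(cmod (u - v))\<^sup>2 = (cmod u)\<^sup>2 - 2 * Re (u * cnj v) + (cmod v)\<^sup>2" for u v :: complex
    unfolding cmod_power2 by (simp add: power2_eq_square algebra_simps)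
  show ?thesis unfolding power2_norm_vec_complex cinner_def
    by (simp add: c sum_subtractf sum.distrib sum_distrib_left[symmetric] Re_sum)
qed

lemma tendsto_cinner: "(f \<longlongrightarrow> l) F \<Longrightarrow> ((\<lambda>x. cinner (f x) a) \<longlongrightarrow> cinner l a) F"
  unfolding cinner_def by (intro tendsto_intros)

lemma holomorphic_on_cinner:
  fixes g :: "complex \<Rightarrow> complex^'n"
  assumes "\<forall>i. (\<lambda>z. g z $ i) holomorphic_on S"
  shows "(\<lambda>z. cinner (g z) a) holomorphic_on S"
  unfolding cinner_def using assms by (intro holomorphic_intros) auto

lemma tendsto_vector_smult_left:
  "(c \<longlongrightarrow> d) F \<Longrightarrow> ((\<lambda>x. c x *s a) \<longlongrightarrow> d *s (a::complex^'n)) F"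
  by (rule vec_tendstoI) (simp add: tendsto_mult tendsto_const)

lemma of_real_smult_eq_scaleR: "(complex_of_real t) *s (z::complex^'n) = t *\<^sub>R z"
  by (rule vec_eq_iff[THEN iffD2])
    (simp only: vector_smult_component vector_scaleR_component, simp add: scaleR_conv_of_real)

lemma complex_line_unit_generator:
  assumes "complex_line m"
  obtains a where "norm a = 1" "m = {c *s a | c. True}"
proof -
  obtain v where v: "v \<noteq> 0" "m = {c *s v | c. True}"
    using assms unfolding complex_line_def by blast
  define a where "a = complex_of_real (1 / norm v) *s v"
  have "norm a = 1" using v(1) by (simp add: a_def norm_vector_smult norm_divide)
  moreover have "c *s v = (c * complex_of_real (norm v)) *s a" for c
    using v(1) by (simp add: a_def vector_smult_assoc)
  moreover have "c *s a = (c * complex_of_real (1/norm v)) *s v" for c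
    by (simp add: a_def vector_smult_assoc)
  ultimately show ?thesis using that unfolding v(2) by blast
qed

lemma complex_line_smult: "complex_line m \<Longrightarrow> z \<in> m \<Longrightarrow> c *s z \<in> m"
  unfolding complex_line_def by (auto simp: vector_smult_assoc)

lemma complex_line_scaleR: "complex_line m \<Longrightarrow> z \<in> m \<Longrightarrow> t *\<^sub>R z \<in> m"
  using complex_line_smult[of m z "complex_of_real t"] by (simp add: of_real_smult_eq_scaleR)

lemma closed_complex_line:
  assumes "complex_line m" shows "closed m"
proof -
  obtain a where a: "norm a = 1" "m = {c *s a | c. True}"
    using complex_line_unit_generator[OF assms] by blast
  have "cinner (c *s a) a = c" for c
    using a(1) by (simp add: cinner_smult_left cinner_self)
  then have "m = {x. cinner x a *s a = x}"
    unfolding a(2) by (auto simp del: vector_smult_assoc) metis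
  moreover have "continuous_on UNIV (\<lambda>x. cinner x a *s a)"
    unfolding continuous_on_def by (intro ballI tendsto_vector_smult_left tendsto_cinner tendsto_ident_at)
  ultimately show ?thesis by (simp add: closed_Collect_eq)
qed

lemma complex_line_eq_span:
  assumes "complex_line m" "w \<in> m" "w \<noteq> 0"
  shows "m = {c *s w | c. True}"
proof -
  obtain a where a: "norm a = 1" "m = {c *s a | c. True}"
    using complex_line_unit_generator[OF assms(1)] by blast
  obtain d where d: "w = d *s a" using assms(2) a(2) by blast
  have "d \<noteq> 0" using d assms(3) by auto
  have "c *s a = (c / d) *s w" for c using \<open>d \<noteq> 0\<close> by (simp add: d vector_smult_assoc)
  moreover have "c *s w = (c * d) *s a" for c by (simp add: d vector_smult_assoc)
  ultimately show ?thesis unfolding a(2) by blast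
qed

lemma complex_lines_inter_eq_zero:
  assumes "complex_line m" "complex_line m'" "m \<noteq> m'" "w \<in> m" "w \<in> m'"
  shows "w = 0"
  using complex_line_eq_span[OF assms(1,4)] complex_line_eq_span[OF assms(2,5)] assms(3) by blast

lemma connected_punctured_complex_line_ball:
  assumes "complex_line m"
  shows "connected {q\<in>m. q \<noteq> 0 \<and> norm q < r}"
proof -
  obtain a where a: "norm a = 1" "m = {c *s a | c. True}"
    using complex_line_unit_generator[OF assms] by blast
  have "{q\<in>m. q \<noteq> 0 \<and> norm q < r} = (\<lambda>w. w *s a) ` (ball 0 r - {0})"
    using a by (auto simp: norm_vector_smult)
  moreover have "continuous_on (ball 0 r - {0}) (\<lambda>w. w *s a)"
    unfolding continuous_on_def by (intro ballI tendsto_vector_smult_left tendsto_ident_at)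
  moreover have "connected (ball (0::complex) r - {0})" by (rule connected_punctured_ball) simp
  ultimately show ?thesis using connected_continuous_image by metis
qed

section \<open>Relative closeness to lines\<close>

definition near :: "'a::real_normed_vector \<Rightarrow> 'a set \<Rightarrow> real \<Rightarrow> bool" where
  "near y l d \<longleftrightarrow> (\<exists>z\<in>l. dist y z < d * norm y)"

lemma near_stable:
  assumes "near x l d" "d > 0"
  shows "\<exists>\<eta>>0. \<forall>y. dist y x < \<eta> \<longrightarrow> near y l d"
proof -
  obtain z where z: "z \<in> l" "dist x z < d * norm x" using assms(1) unfolding near_def by blast
  define g where "g = d * norm x - dist x z"
  have g: "g > 0" using z by (simp add: g_def)
  have "near y l d" if y: "dist y x < g / (1 + d)" for y
  proof -
    have nx: "norm x \<le> norm y + dist y x"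
      using norm_triangle_ineq[of y "x - y"] by (simp add: dist_norm norm_minus_commute)
    have "(1 + d) * dist y x < g" using y assms(2) by (simp add: field_simps)
    have "dist y z \<le> dist y x + dist x z" by (rule dist_triangle)
    also have "\<dots> = dist y x + d * norm x - g" by (simp add: g_def)
    also have "\<dots> \<le> dist y x + d * (norm y + dist y x) - g"
      using nx assms(2) by (simp add: mult_left_mono)
    also have "\<dots> = (1 + d) * dist y x + d * norm y - g" by (simp add: algebra_simps)
    also have "\<dots> < d * norm y" using \<open>(1 + d) * dist y x < g\<close> by simp
    finally show ?thesis using z(1) unfolding near_def by blast
  qed
  moreover have "g / (1 + d) > 0" using g assms(2) by simp
  ultimately show ?thesis by blast
qed

lemma dist_scaleR_norm:
  fixes y :: "'a::real_normed_vector"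
  assumes "y \<noteq> 0" shows "dist y (norm y *\<^sub>R b) = norm y * dist (y /\<^sub>R norm y) b"
proof -
  have "y - norm y *\<^sub>R b = norm y *\<^sub>R (y /\<^sub>R norm y - b)"
    using assms by (simp add: scaleR_diff_right)
  then show ?thesis by (simp add: dist_norm)
qed

lemma near_scaleR_norm:
  assumes "y \<noteq> 0" "dist (y /\<^sub>R norm y) b < d" "norm y *\<^sub>R b \<in> l"
  shows "near y l d"
  using assms dist_scaleR_norm[OF assms(1), of b] unfolding near_def
  by (metis mult.commute mult_strict_left_mono zero_less_norm_iff)

lemma near_complex_line_cinner:
  assumes a: "norm a = 1" "m = {c *s a | c. True}" and n: "near x m d"
  shows "(1 - 2 * d) * norm x \<le> cmod (cinner x a)"
    and "norm (x - cinner x a *s a) \<le> 2 * d * norm x"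
proof -
  obtain z where z: "z \<in> m" "dist x z < d * norm x" using n unfolding near_def by blast
  obtain c where c: "z = c *s a" using z(1) a(2) by blast
  have ca: "cinner z a = c" using a(1) by (simp add: c cinner_smult_left cinner_self)
  have d1: "cmod (c - cinner x a) \<le> norm (x - z)"
    using norm_cinner_le[of "x - z" a] a(1) by (simp add: cinner_diff_left ca norm_minus_commute)
  have "x - cinner x a *s a = (x - z) + (c - cinner x a) *s a"
    by (simp add: c vec_eq_iff algebra_simps)
  then have "norm (x - cinner x a *s a) \<le> norm (x - z) + norm ((c - cinner x a) *s a)"
    by (metis norm_triangle_ineq)
  also have "\<dots> = norm (x - z) + cmod (c - cinner x a)"
    by (simp only: norm_vector_smult a(1) mult_1_right)
  also have "\<dots> \<le> 2 * d * norm x" using d1 z(2) by (simp add: dist_norm)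
  finally show "norm (x - cinner x a *s a) \<le> 2 * d * norm x" .
  have "norm x \<le> norm (x - z) + cmod c"
    using norm_triangle_ineq[of "x - z" z] a(1) by (simp add: c norm_vector_smult)
  moreover have "cmod c \<le> cmod (cinner x a) + cmod (c - cinner x a)"
    using norm_triangle_ineq[of "cinner x a" "c - cinner x a"] by simp
  ultimately show "(1 - 2 * d) * norm x \<le> cmod (cinner x a)"
    using d1 z(2) by (simp add: dist_norm algebra_simps)
qed

definition lines_separated :: "real \<Rightarrow> 'a::real_normed_vector set set \<Rightarrow> bool" where
  "lines_separated c L \<longleftrightarrow> (\<forall>l\<in>L. \<forall>l'\<in>L. l \<noteq> l' \<longrightarrow>
     (\<forall>y z z'. z \<in> l \<longrightarrow> z' \<in> l' \<longrightarrow> c * norm y \<le> dist y z + dist y z'))"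

lemma lines_separated_not_near_both:
  assumes "lines_separated c L" "l \<in> L" "l' \<in> L" "l \<noteq> l'"
    and "near y l d" "near y l' d'" "d + d' \<le> c"
  shows False
proof -
  obtain z z' where "z \<in> l" "z' \<in> l'" "dist y z < d * norm y" "dist y z' < d' * norm y"
    using assms(5,6) unfolding near_def by blast
  moreover have "(d + d') * norm y \<le> c * norm y" using assms(7) by (simp add: mult_right_mono)
  moreover have "c * norm y \<le> dist y z + dist y z'"
    using assms(1-4) calculation unfolding lines_separated_def by blast
  ultimately show False by (simp add: distrib_right)
qed

lemma unit_sequence_convergent_subseq:
  fixes u :: "nat \<Rightarrow> 'a::euclidean_space"
  assumes "\<And>k. norm (u k) = 1"
  obtains \<sigma> u0 where "strict_mono \<sigma>" "(u \<circ> \<sigma>) \<longlonglongrightarrow> u0" "norm u0 = 1"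
proof -
  have "seq_compact (sphere (0::'a) 1)" by (simp add: compact_imp_seq_compact)
  moreover have "\<forall>k. u k \<in> sphere 0 1" using assms by simp
  ultimately show ?thesis using that unfolding seq_compact_def by (metis mem_sphere_0)
qed

lemma distinct_complex_lines_apart:
  assumes l: "complex_line l" and l': "complex_line l'" and ne: "l \<noteq> l'"
  shows "\<exists>c>0. \<forall>z\<in>l. \<forall>z'\<in>l'. c * norm z \<le> dist z z'"
proof (rule ccontr)
  assume "\<not> ?thesis"
  then have "\<forall>k. \<exists>z\<in>l. \<exists>z'\<in>l'. dist z z' < inverse (real (Suc k)) * norm z"
    by (metis not_le of_nat_0_less_iff positive_imp_inverse_positive zero_less_Suc)
  then obtain z z' where zz: "\<And>k. z k \<in> l" "\<And>k. z' k \<in> l'"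
    "\<And>k. dist (z k) (z' k) < inverse (real (Suc k)) * norm (z k)" by metis
  have nz: "z k \<noteq> 0" for k using zz(3)[of k] by auto
  define u where "u k = z k /\<^sub>R norm (z k)" for k
  define u' where "u' k = z' k /\<^sub>R norm (z k)" for k
  have u1: "norm (u k) = 1" for k using nz by (simp add: u_def)
  have du: "norm (u' k - u k) \<le> inverse (real (Suc k))" for k
  proof -
    have "norm (u' k - u k) = dist (z k) (z' k) / norm (z k)"
      by (simp add: u_def u'_def dist_norm norm_minus_commute divide_inverse mult.commute
          flip: scaleR_diff_right)
    also have "\<dots> \<le> inverse (real (Suc k))"
      using zz(3)[of k] nz by (simp add: divide_le_eq)
    finally show ?thesis .
  qed
  obtain \<sigma> u0 where s: "strict_mono \<sigma>" "(u \<circ> \<sigma>) \<longlonglongrightarrow> u0" "norm u0 = 1"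
    using unit_sequence_convergent_subseq[of u] u1 by blast
  have "(\<lambda>k. u' (\<sigma> k) - u (\<sigma> k)) \<longlonglongrightarrow> 0"
  proof (rule Lim_null_comparison)
    show "\<forall>\<^sub>F k in sequentially. norm (u' (\<sigma> k) - u (\<sigma> k)) \<le> inverse (real (Suc k))"
      using du seq_suble[OF s(1)] by (intro always_eventually allI order_trans[OF du]) (simp add: le_imp_inverse_le)
    show "(\<lambda>k. inverse (real (Suc k))) \<longlonglongrightarrow> 0" by (rule LIMSEQ_inverse_real_of_nat)
  qed
  then have "(u' \<circ> \<sigma>) \<longlonglongrightarrow> u0"
    using tendsto_add[OF s(2)] by (force simp: o_def)
  moreover have "\<And>k. (u \<circ> \<sigma>) k \<in> l" "\<And>k. (u' \<circ> \<sigma>) k \<in> l'"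
    using complex_line_scaleR[OF l zz(1)] complex_line_scaleR[OF l' zz(2)] by (simp_all add: u_def u'_def)
  ultimately have "u0 \<in> l" "u0 \<in> l'"
    using s(2) closed_sequentially[OF closed_complex_line] l l' by metis+
  then have "u0 = 0" using complex_lines_inter_eq_zero[OF l l' ne] by blast
  with s(3) show False by simp
qed

lemma distinct_complex_lines_separated:
  assumes "complex_line l" "complex_line l'" "l \<noteq> l'"
  shows "\<exists>c>0. \<forall>y z z'. z \<in> l \<longrightarrow> z' \<in> l' \<longrightarrow> c * norm y \<le> dist y z + dist y z'"
proof -
  obtain c0 where c0: "c0 > 0" "\<And>z z'. z \<in> l \<Longrightarrow> z' \<in> l' \<Longrightarrow> c0 * norm z \<le> dist z z'"
    using distinct_complex_lines_apart[OF assms] by blast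
  have "c0 / (1 + c0) * norm y \<le> dist y z + dist y z'" if "z \<in> l" "z' \<in> l'" for y z z'
  proof -
    have "c0 * norm z \<le> dist y z + dist y z'"
      using c0(2)[OF that] dist_triangle[of z z' y] by (simp add: dist_commute)
    moreover have "c0 * norm y \<le> c0 * dist y z + c0 * norm z"
      using norm_triangle_ineq[of "y - z" z] c0(1) by (simp add: dist_norm flip: distrib_left)
    moreover have "c0 * dist y z \<le> c0 * dist y z + c0 * dist y z'" using c0(1) by simp
    ultimately have "c0 * norm y \<le> (1 + c0) * (dist y z + dist y z')"
      by (simp add: algebra_simps)
    then show ?thesis using c0(1) by (simp add: divide_le_eq mult.commute)
  qed
  moreover have "c0 / (1 + c0) > 0" using c0(1) by simp
  ultimately show ?thesis by blast
qed

lemma finite_complex_lines_separated: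
  assumes "finite L" "\<forall>l\<in>L. complex_line l"
  obtains c where "c > 0" "lines_separated c L"
proof -
  define P where "P = {(l,l'). l \<in> L \<and> l' \<in> L \<and> l \<noteq> l'}"
  have "finite P" by (rule finite_subset[of P "L \<times> L"]) (auto simp: P_def assms(1))
  have "\<forall>p\<in>P. \<exists>c>0. \<forall>y z z'. z \<in> fst p \<longrightarrow> z' \<in> snd p \<longrightarrow> c * norm y \<le> dist y z + dist y z'"
    using distinct_complex_lines_separated assms(2) by (auto simp: P_def)
  then obtain C where C: "\<And>p. p \<in> P \<Longrightarrow> C p > 0"
    "\<And>p y z z'. p \<in> P \<Longrightarrow> z \<in> fst p \<Longrightarrow> z' \<in> snd p \<Longrightarrow> C p * norm y \<le> dist y z + dist y z'"
    by metis
  define c where "c = Min (insert 1 (C ` P))"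
  have "c > 0" unfolding c_def using \<open>finite P\<close> C(1) by (subst Min_gr_iff) auto
  moreover have c_le: "c \<le> C p" if "p \<in> P" for p unfolding c_def using \<open>finite P\<close> that by simp
  have "c * norm y \<le> dist y z + dist y z'"
    if "l \<in> L" "l' \<in> L" "l \<noteq> l'" "z \<in> l" "z' \<in> l'" for l l' y z z'
  proof -
    have p: "(l, l') \<in> P" using that by (simp add: P_def)
    have "c * norm y \<le> C (l, l') * norm y" using c_le[OF p] by (simp add: mult_right_mono)
    also have "\<dots> \<le> dist y z + dist y z'" using C(2)[OF p] that by simp
    finally show ?thesis .
  qed
  then have "lines_separated c L" unfolding lines_separated_def by blast
  ultimately show ?thesis using that by blast
qed

section \<open>Tangent cones\<close>

lemma tangent_direction_in_cone: "a \<in> tangent_directions A \<Longrightarrow> a \<in> tangent_cone A"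
  unfolding tangent_cone_def by (rule CollectI, rule exI[of _ 1], rule exI[of _ a]) simp

lemma unit_tangent_cone_imp_direction:
  assumes "a \<in> tangent_cone A" "norm a = 1" shows "a \<in> tangent_directions A"
proof -
  obtain t b where tb: "a = t *\<^sub>R b" "b \<in> tangent_directions A" "t \<ge> 0"
    using assms(1) unfolding tangent_cone_def by blast
  have "norm b = 1" using tb(2) unfolding tangent_directions_def by simp
  then have "t = 1" using assms(2) tb by simp
  then show ?thesis using tb by simp
qed

lemma norm_limit_of_unit_sequence:
  fixes u :: "nat \<Rightarrow> 'a::real_normed_vector"
  assumes "\<And>k. norm (u k) = 1" "u \<longlonglongrightarrow> a" shows "norm a = 1"
proof -
  have "(\<lambda>k. 1::real) \<longlonglongrightarrow> norm a" using tendsto_norm[OF assms(2)] assms(1) by simp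
  then show ?thesis using LIMSEQ_unique[OF _ tendsto_const] by metis
qed

lemma tangent_cone_lines_near:
  fixes A :: "(complex^'n) set"
  assumes cone: "tangent_cone A = \<Union>L" and lines: "\<forall>l\<in>L. complex_line l" and d: "d > 0"
  shows "\<exists>r>0. \<forall>y\<in>A. y \<noteq> 0 \<and> norm y < r \<longrightarrow> (\<exists>l\<in>L. near y l d)"
proof (rule ccontr)
  assume "\<not> ?thesis"
  then have "\<forall>k. \<exists>y. y \<in> A \<and> y \<noteq> 0 \<and> norm y < inverse (real (Suc k)) \<and> (\<forall>l\<in>L. \<not> near y l d)"
    by (metis of_nat_0_less_iff positive_imp_inverse_positive zero_less_Suc)
  then obtain y where y: "\<And>k. y k \<in> A - {0}" "\<And>k. norm (y k) < inverse (real (Suc k))"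
    "\<And>k l. l \<in> L \<Longrightarrow> \<not> near (y k) l d" by (metis Diff_iff singletonD)
  define u where "u k = y k /\<^sub>R norm (y k)" for k
  have "norm (u k) = 1" for k using y(1) by (simp add: u_def)
  then obtain \<sigma> u0 where s: "strict_mono \<sigma>" "(u \<circ> \<sigma>) \<longlonglongrightarrow> u0" "norm u0 = 1"
    using unit_sequence_convergent_subseq by blast
  have "(y \<circ> \<sigma>) \<longlonglongrightarrow> 0"
  proof (rule Lim_null_comparison)
    show "\<forall>\<^sub>F k in sequentially. norm ((y \<circ> \<sigma>) k) \<le> inverse (real (Suc k))"
    proof (intro always_eventually allI)
      fix k
      have "inverse (real (Suc (\<sigma> k))) \<le> inverse (real (Suc k))"
        using seq_suble[OF s(1), of k] by (simp add: le_imp_inverse_le)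
      then show "norm ((y \<circ> \<sigma>) k) \<le> inverse (real (Suc k))"
        using y(2)[of "\<sigma> k"] unfolding o_def by linarith
    qed
    show "(\<lambda>k. inverse (real (Suc k))) \<longlonglongrightarrow> 0" by (rule LIMSEQ_inverse_real_of_nat)
  qed
  then have "u0 \<in> tangent_directions A"
    unfolding tangent_directions_def using s(2,3) y(1)
    by (intro CollectI conjI exI[of _ "y \<circ> \<sigma>"]) (simp_all add: u_def o_def)
  then obtain l where l: "l \<in> L" "u0 \<in> l" using cone tangent_direction_in_cone by blast
  obtain k where k: "dist (u (\<sigma> k)) u0 < d"
    using tendstoD[OF s(2) d] unfolding eventually_sequentially by auto
  have "near (y (\<sigma> k)) l d"
    using y(1) k complex_line_scaleR[of l u0] lines l by (intro near_scaleR_norm) (auto simp: u_def)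
  with y(3) l show False by blast
qed

lemma connected_locally_functional_relation:
  fixes Q :: "'a::metric_space set"
  assumes "connected Q" and ex: "\<And>q. q \<in> Q \<Longrightarrow> \<exists>l. R q l"
    and loc: "\<And>q. q \<in> Q \<Longrightarrow> \<exists>e>0. \<forall>q'\<in>Q. dist q' q < e \<longrightarrow> (\<forall>l l'. R q l \<longrightarrow> R q' l' \<longrightarrow> l = l')"
    and q: "q1 \<in> Q" "q2 \<in> Q" "R q1 l1" "R q2 l2"
  shows "l1 = l2"
proof -
  define f where "f q = (SOME l. R q l)" for q
  have f: "R q (f q)" if "q \<in> Q" for q unfolding f_def using someI_ex[OF ex[OF that]] .
  have uniq: "l = f q" if qQ: "q \<in> Q" and Rl: "R q l" for q l
    using loc[OF qQ] f[OF qQ] Rl qQ by auto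
  have "f q1 = f q2"
  proof (rule connected_local_const[OF assms(1) q(1,2)], intro ballI)
    fix a assume a: "a \<in> Q"
    obtain e where e: "e > 0" "\<forall>q'\<in>Q. dist q' a < e \<longrightarrow> (\<forall>l l'. R a l \<longrightarrow> R q' l' \<longrightarrow> l = l')"
      using loc[OF a] by auto
    then have "\<forall>b\<in>Q. b \<noteq> a \<and> dist b a < e \<longrightarrow> f a = f b" using f a by auto
    with e(1) show "\<forall>\<^sub>F b in at a within Q. f a = f b"
      unfolding eventually_at by auto
  qed
  then show ?thesis using uniq q by metis
qed

section \<open>Bi-Lipschitz maps\<close>

definition bilipschitz_on ::
    "real \<Rightarrow> real \<Rightarrow> 'a::metric_space set \<Rightarrow> ('a \<Rightarrow> 'b::metric_space) \<Rightarrow> bool" where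
  "bilipschitz_on K1 K2 U h \<longleftrightarrow> 0 < K1 \<and> K1 \<le> K2 \<and>
     (\<forall>x\<in>U. \<forall>y\<in>U. K1 * dist x y \<le> dist (h x) (h y) \<and> dist (h x) (h y) \<le> K2 * dist x y)"

lemma bilipschitz_on_norm_bounds:
  fixes h :: "'a::real_normed_vector \<Rightarrow> 'b::real_normed_vector"
  assumes "bilipschitz_on K1 K2 U h" "x \<in> U" "0 \<in> U" "h 0 = 0"
  shows "K1 * norm x \<le> norm (h x)" "norm (h x) \<le> K2 * norm x"
  using assms unfolding bilipschitz_on_def by (metis dist_0_norm)+

lemma bilipschitz_on_nonzero:
  fixes h :: "'a::real_normed_vector \<Rightarrow> 'b::real_normed_vector"
  assumes "bilipschitz_on K1 K2 U h" "x \<in> U" "0 \<in> U" "h 0 = 0" "x \<noteq> 0"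
  shows "h x \<noteq> 0"
proof -
  have "K1 * norm x > 0" using assms(1,5) unfolding bilipschitz_on_def by simp
  then show ?thesis using bilipschitz_on_norm_bounds(1)[OF assms(1-4)] by auto
qed

lemma bilipschitz_on_tendsto_zero:
  fixes h :: "'a::real_normed_vector \<Rightarrow> 'b::real_normed_vector"
  assumes "bilipschitz_on K1 K2 U h" "\<And>k. x k \<in> U" "0 \<in> U" "h 0 = 0" "x \<longlonglongrightarrow> 0"
  shows "(\<lambda>k. h (x k)) \<longlonglongrightarrow> 0"
proof (rule Lim_null_comparison)
  show "\<forall>\<^sub>F k in sequentially. norm (h (x k)) \<le> K2 * norm (x k)"
    using bilipschitz_on_norm_bounds(2)[OF assms(1) assms(2) assms(3,4)] by simp
  show "(\<lambda>k. K2 * norm (x k)) \<longlonglongrightarrow> 0"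
    using assms(5) by (intro tendsto_mult_right_zero tendsto_norm_zero)
qed

lemma bilipschitz_image_near_point:
  fixes h :: "'a::real_normed_vector \<Rightarrow> 'b::real_normed_vector"
  assumes bl: "bilipschitz_on K1 K2 U h" "ball 0 r \<subseteq> U" "h 0 = 0"
    and q: "dist x q \<le> norm q / 4" "norm q < r / 2" "q \<noteq> 0"
  shows "x \<in> U" "x \<noteq> 0" "h x \<noteq> 0" "norm (h x) \<le> 2 * K2 * norm q"
proof -
  have "norm x \<le> 2 * norm q" "norm q \<le> norm x + norm q / 4"
    using q(1) norm_triangle_ineq2[of x q] norm_triangle_ineq3[of q x] norm_ge_zero[of q]
    by (simp_all add: dist_norm norm_minus_commute)
  then show xU: "x \<in> U" and x0: "x \<noteq> 0" using q(2,3) bl(2) by auto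
  have "r > 0" using q(2) norm_ge_zero[of q] by linarith
  then have "0 \<in> U" using bl(2) by auto
  then show "h x \<noteq> 0" using bilipschitz_on_nonzero[OF bl(1) xU _ bl(3) x0] by blast
  have "K2 \<ge> 0" using bl(1) unfolding bilipschitz_on_def by simp
  then show "norm (h x) \<le> 2 * K2 * norm q"
    using bilipschitz_on_norm_bounds(2)[OF bl(1) xU \<open>0 \<in> U\<close> bl(3)]
      mult_left_mono[OF \<open>norm x \<le> 2 * norm q\<close> \<open>K2 \<ge> 0\<close>] by simp
qed

lemma bilipschitz_germ_map_imp_bilipschitz_on:
  assumes "bilipschitz_germ_map h U V"
  obtains K1 K2 where "bilipschitz_on K1 K2 U h"
  using assms unfolding bilipschitz_germ_map_def bilipschitz_on_def by blast

lemma bilipschitz_germ_map_inverse: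
  assumes "bilipschitz_germ_map h U V"
  obtains h' where "bilipschitz_germ_map h' V U" "\<forall>x\<in>U. h' (h x) = x" "\<forall>y\<in>V. h (h' y) = y"
    "h ` U = V"
proof -
  obtain h' K1 K2 where b: "open U" "open V" "0 \<in> U" "h 0 = 0" "homeomorphism U V h h'"
    "0 < K1" "K1 \<le> K2"
    "\<forall>x\<in>U. \<forall>y\<in>U. K1 * dist x y \<le> dist (h x) (h y) \<and> dist (h x) (h y) \<le> K2 * dist x y"
    using assms unfolding bilipschitz_germ_map_def by blast
  have hm: "h ` U = V" "\<forall>x\<in>U. h' (h x) = x" "\<forall>y\<in>V. h (h' y) = y"
    using b(5) unfolding homeomorphism_def by auto
  have "1/K2 * dist y y' \<le> dist (h' y) (h' y') \<and> dist (h' y) (h' y') \<le> 1/K1 * dist y y'"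
    if "y \<in> V" "y' \<in> V" for y y'
  proof -
    obtain x x' where x: "x \<in> U" "x' \<in> U" "y = h x" "y' = h x'" using hm(1) \<open>y \<in> V\<close> \<open>y' \<in> V\<close> by blast
    then have "K1 * dist x x' \<le> dist y y'" "dist y y' \<le> K2 * dist x x'" using b(8) by auto
    then show ?thesis
      using x hm(2) b(6,7) by (simp add: divide_le_eq le_divide_eq mult.commute)
  qed
  moreover have "0 \<in> V" "h' 0 = 0" using hm b(3,4) by force+
  moreover have "homeomorphism V U h' h" using b(5) by (simp add: homeomorphism_symD)
  moreover have "0 < 1/K2" "1/K2 \<le> 1/K1" using b(6,7) by (simp_all add: frac_le)
  ultimately have "bilipschitz_germ_map h' V U"
    unfolding bilipschitz_germ_map_def using b(1,2) by blast
  then show ?thesis using that hm by blast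
qed

lemma close_pairs_bounds:
  fixes q q' x x' :: "'a::real_normed_vector"
  assumes \<epsilon>: "\<epsilon> > 0" "\<epsilon> \<le> 1/4"
    and d: "dist q q' \<le> \<epsilon> * norm q" "dist x q \<le> \<epsilon> * norm q" "dist x' q' \<le> \<epsilon> * norm q'"
  shows "norm x \<le> 2 * norm q" "norm q / 2 \<le> norm x'" "dist x x' \<le> 4 * \<epsilon> * norm q"
proof -
  define n where "n = norm q"
  have n: "n \<ge> 0" by (simp add: n_def)
  have e1: "\<epsilon> * n \<le> n / 4" using mult_right_mono[OF \<epsilon>(2) n] by simp
  have qq': "norm (q - q') \<le> \<epsilon> * n" using d(1) by (simp add: dist_norm n_def)
  have nq': "norm q' \<le> 2 * n" "(1 - \<epsilon>) * n \<le> norm q'"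
    using qq' e1 norm_triangle_ineq2[of q q'] norm_triangle_ineq3[of q' q]
    by (simp_all add: n_def norm_minus_commute algebra_simps)
  show "norm x \<le> 2 * norm q"
    using d(2) e1 norm_triangle_ineq2[of x q] norm_ge_zero[of q] unfolding dist_norm n_def by linarith
  have nx': "(1 - \<epsilon>) * norm q' \<le> norm x'"
    using d(3) norm_triangle_ineq2[of q' x'] by (simp add: dist_norm norm_minus_commute algebra_simps)
  have e34: "3/4 \<le> 1 - \<epsilon>" using \<epsilon>(2) by simp
  have "n / 2 \<le> (3/4) * ((3/4) * n)" using n by simp
  also have "\<dots> \<le> (1 - \<epsilon>) * ((1 - \<epsilon>) * n)" using e34 n by (intro mult_mono) auto
  also have "\<dots> \<le> (1 - \<epsilon>) * norm q'" using nq'(2) e34 by (intro mult_left_mono) auto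
  also have "\<dots> \<le> norm x'" by (rule nx')
  finally show "norm q / 2 \<le> norm x'" by (simp add: n_def)
  have "dist x x' \<le> dist x q + dist q q' + dist q' x'"
    using dist_triangle[of x x' q] dist_triangle[of q x' q'] by linarith
  also have "\<dots> \<le> \<epsilon> * n + \<epsilon> * n + \<epsilon> * (2 * n)"
  proof -
    have "\<epsilon> * norm q' \<le> \<epsilon> * (2 * n)" using nq'(1) \<epsilon>(1) by (simp add: mult_left_mono)
    then show ?thesis using d unfolding n_def by (simp add: dist_commute)
  qed
  finally show "dist x x' \<le> 4 * \<epsilon> * norm q" by (simp add: n_def)
qed

text \<open>With these constants the error terms add up to at most \<open>3/32 c K1 |q|\<close>, while
  \<open>|h x'| \<ge> K1 |q| / 2\<close>.\<close>
lemma bilipschitz_near_transfer: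
  fixes q q' x x' :: "'a::real_normed_vector"
  assumes bl: "bilipschitz_on K1 K2 U h" and U: "x \<in> U" "x' \<in> U" "0 \<in> U" and h0: "h 0 = 0"
    and c: "c > 0" and \<delta>: "\<delta> = c * K1 / (32 * K2)"
    and \<epsilon>: "\<epsilon> > 0" "\<epsilon> \<le> 1/4" "\<epsilon> \<le> c * K1 / (128 * K2)"
    and d: "dist q q' \<le> \<epsilon> * norm q" "dist x q \<le> \<epsilon> * norm q" "dist x' q' \<le> \<epsilon> * norm q'"
    and q: "q \<noteq> 0" and near_hx: "near (h x) l \<delta>"
  shows "near (h x') l (c - \<delta>)"
proof -
  have K: "0 < K1" "K1 \<le> K2"
    and Lip: "dist (h x) (h x') \<le> K2 * dist x x'"
    using bl U unfolding bilipschitz_on_def by auto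
  note bounds = close_pairs_bounds[OF \<epsilon>(1,2) d]
  define n where "n = norm q"
  have n: "n > 0" using q by (simp add: n_def)
  have \<delta>K: "\<delta> * K2 = c * K1 / 32" using \<delta> K by simp
  have "c * K1 / (32 * K2) \<le> c * K2 / (32 * K2)"
    using K c by (intro divide_right_mono mult_left_mono) auto
  then have \<delta>c: "\<delta> \<le> c / 32" using \<delta> K by simp
  have \<epsilon>K: "K2 * \<epsilon> \<le> c * K1 / 128" using \<epsilon>(3) K by (simp add: field_simps)
  have hx: "norm (h x) \<le> K2 * (2 * n)"
    using bilipschitz_on_norm_bounds(2)[OF bl U(1,3) h0] mult_left_mono[OF bounds(1), of K2] K
    by (simp add: n_def order_trans)
  have "K1 * (n / 2) \<le> K1 * norm x'" using bounds(2) K by (simp add: n_def)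
  also have "\<dots> \<le> norm (h x')" by (rule bilipschitz_on_norm_bounds(1)[OF bl U(2,3) h0])
  finally have hx': "K1 * (n / 2) \<le> norm (h x')" .
  obtain z where z: "z \<in> l" "dist (h x) z < \<delta> * norm (h x)" using near_hx unfolding near_def by blast
  have "dist (h x') z \<le> dist (h x') (h x) + dist (h x) z" by (rule dist_triangle)
  also have "\<dots> < K2 * dist x x' + \<delta> * norm (h x)"
    using Lip z(2) by (simp add: dist_commute)
  also have "\<dots> \<le> K2 * (4 * \<epsilon> * n) + \<delta> * (K2 * (2 * n))"
  proof -
    have "\<delta> \<ge> 0" using \<delta> c K by simp
    then show ?thesis using bounds(3) hx K by (intro add_mono mult_left_mono) (auto simp: n_def)
  qed
  also have "\<dots> = 4 * n * (K2 * \<epsilon>) + 2 * n * (\<delta> * K2)" by (simp add: algebra_simps)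
  also have "\<dots> \<le> 4 * n * (c * K1 / 128) + 2 * n * (c * K1 / 32)"
    using \<epsilon>K \<delta>K n by (intro add_mono mult_left_mono) auto
  also have "\<dots> < (31/32 * c) * (K1 * (n / 2))"
    using K c n by (simp add: algebra_simps)
  also have "\<dots> \<le> (c - \<delta>) * norm (h x')"
    using hx' \<delta>c K c n by (intro mult_mono) auto
  finally show ?thesis using z(1) unfolding near_def by blast
qed

section \<open>Lines of tangency carried by a bi-Lipschitz map\<close>

definition approximates_line :: "'a::real_normed_vector set \<Rightarrow> 'a set \<Rightarrow> bool" where
  "approximates_line W m \<longleftrightarrow>
     (\<forall>e>0. \<exists>r>0. \<forall>q\<in>m. q \<noteq> 0 \<and> norm q < r \<longrightarrow> (\<exists>x\<in>W. dist x q \<le> e * norm q))"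

definition carries_direction ::
    "('a::real_normed_vector \<Rightarrow> 'b::real_normed_vector) \<Rightarrow> 'a set \<Rightarrow> 'a set \<Rightarrow> 'a set \<Rightarrow> 'b set \<Rightarrow> bool" where
  "carries_direction h U W m l \<longleftrightarrow> (\<exists>x a b. (\<forall>k. x k \<in> W \<inter> U - {0}) \<and> x \<longlonglongrightarrow> 0 \<and>
      (\<lambda>k. x k /\<^sub>R norm (x k)) \<longlonglongrightarrow> a \<and> a \<in> m \<and>
      (\<lambda>k. h (x k) /\<^sub>R norm (h (x k))) \<longlonglongrightarrow> b \<and> b \<in> l)"

lemma carries_directionI:
  assumes "\<And>k. x k \<in> W \<inter> U - {0}" "x \<longlonglongrightarrow> 0" "(\<lambda>k. x k /\<^sub>R norm (x k)) \<longlonglongrightarrow> a" "a \<in> m"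
    "(\<lambda>k. h (x k) /\<^sub>R norm (h (x k))) \<longlonglongrightarrow> b" "b \<in> l"
  shows "carries_direction h U W m l"
  unfolding carries_direction_def using assms by blast

lemma carries_direction_exists:
  fixes h :: "complex^'n \<Rightarrow> complex^'n"
  assumes bl: "bilipschitz_on K1 K2 U h" and U: "open U" "0 \<in> U" and h0: "h 0 = 0"
    and hW: "h ` (W1 \<inter> U) \<subseteq> W2" and m: "complex_line m" "m \<subseteq> tangent_cone W1"
    and cone2: "tangent_cone W2 = \<Union>L"
  shows "\<exists>l\<in>L. carries_direction h U W1 m l"
proof -
  obtain a where a: "norm a = 1" "m = {c *s a | c. True}"
    using complex_line_unit_generator[OF m(1)] by blast
  have am: "a \<in> m" using a(2) by (metis (mono_tags) mem_Collect_eq vector_smult_lid)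
  then have "a \<in> tangent_directions W1"
    using m(2) a(1) unit_tangent_cone_imp_direction by blast
  then obtain x where x: "\<And>i. x i \<in> W1 - {0}" "x \<longlonglongrightarrow> 0" "(\<lambda>i. x i /\<^sub>R norm (x i)) \<longlonglongrightarrow> a"
    unfolding tangent_directions_def by blast
  obtain N where N: "\<And>k. k \<ge> N \<Longrightarrow> x k \<in> U"
    using topological_tendstoD[OF x(2) U] unfolding eventually_sequentially by blast
  define y where "y k = x (k + N)" for k
  have y: "\<And>k. y k \<in> W1 \<inter> U - {0}" "y \<longlonglongrightarrow> 0" "(\<lambda>k. y k /\<^sub>R norm (y k)) \<longlonglongrightarrow> a"
    using x N LIMSEQ_ignore_initial_segment[OF x(2), of N] LIMSEQ_ignore_initial_segment[OF x(3), of N]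
    unfolding y_def by auto
  have hy0: "h (y k) \<noteq> 0" for k using bilipschitz_on_nonzero[OF bl _ U(2) h0] y(1) by blast
  define v where "v k = h (y k) /\<^sub>R norm (h (y k))" for k
  have "norm (v k) = 1" for k using hy0 by (simp add: v_def)
  then obtain \<sigma> b where s: "strict_mono \<sigma>" "(v \<circ> \<sigma>) \<longlonglongrightarrow> b" "norm b = 1"
    using unit_sequence_convergent_subseq by blast
  have "(\<lambda>k. h (y k)) \<longlonglongrightarrow> 0" using bilipschitz_on_tendsto_zero[OF bl _ U(2) h0 y(2)] y(1) by blast
  then have "b \<in> tangent_directions W2"
    unfolding tangent_directions_def using s hW y(1) hy0
    by (intro CollectI conjI exI[of _ "\<lambda>k. h (y (\<sigma> k))"] allI)
      (auto simp: v_def o_def dest: LIMSEQ_subseq_LIMSEQ[OF _ s(1)])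
  then obtain l where l: "l \<in> L" "b \<in> l" using cone2 tangent_direction_in_cone by blast
  have "carries_direction h U W1 m l"
  proof (rule carries_directionI[of "y \<circ> \<sigma>" _ _ a _ _ b])
    show "(\<lambda>k. (y \<circ> \<sigma>) k /\<^sub>R norm ((y \<circ> \<sigma>) k)) \<longlonglongrightarrow> a"
      using LIMSEQ_subseq_LIMSEQ[OF y(3) s(1)] by (simp add: o_def)
    show "(\<lambda>k. h ((y \<circ> \<sigma>) k) /\<^sub>R norm (h ((y \<circ> \<sigma>) k))) \<longlonglongrightarrow> b"
      using s(2) by (simp add: o_def v_def)
  qed (use y LIMSEQ_subseq_LIMSEQ[OF y(2) s(1)] am l in auto)
  then show ?thesis using l by blast
qed

lemma carries_direction_inverse:
  fixes h :: "'a::real_normed_vector \<Rightarrow> 'b::real_normed_vector"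
  assumes bl: "bilipschitz_on K1 K2 U h" and U: "0 \<in> U" and h0: "h 0 = 0"
    and inv: "\<forall>x\<in>U. h' (h x) = x" and hUV: "h ` U \<subseteq> V" and hW: "h ` (W1 \<inter> U) \<subseteq> W2"
    and R: "carries_direction h U W1 m l"
  shows "carries_direction h' V W2 l m"
proof -
  obtain x a b where x: "\<And>k. x k \<in> W1 \<inter> U - {0}" "x \<longlonglongrightarrow> 0"
      "(\<lambda>k. x k /\<^sub>R norm (x k)) \<longlonglongrightarrow> a" "a \<in> m" "(\<lambda>k. h (x k) /\<^sub>R norm (h (x k))) \<longlonglongrightarrow> b" "b \<in> l"
    using R unfolding carries_direction_def by blast
  have xU: "x k \<in> U" for k using x(1) by blast
  show ?thesis
  proof (rule carries_directionI[of "\<lambda>k. h (x k)" _ _ b _ _ a])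
    show "h (x k) \<in> W2 \<inter> V - {0}" for k
      using hW hUV x(1)[of k] bilipschitz_on_nonzero[OF bl xU U h0, of k] by auto
    show "(\<lambda>k. h (x k)) \<longlonglongrightarrow> 0" using bilipschitz_on_tendsto_zero[OF bl xU U h0 x(2)] .
    show "(\<lambda>k. h' (h (x k)) /\<^sub>R norm (h' (h (x k)))) \<longlonglongrightarrow> a" using x(3) inv xU by simp
  qed (use x in auto)
qed

lemma carries_direction_witness:
  fixes h :: "complex^'n \<Rightarrow> complex^'n"
  assumes R: "carries_direction h U W m l" and lines: "complex_line m" "complex_line l"
    and h: "\<And>x. x \<in> U - {0} \<Longrightarrow> h x \<noteq> 0" and pos: "\<epsilon> > 0" "\<delta> > 0" "r > 0"
  obtains x q where "x \<in> W" "q \<in> m" "q \<noteq> 0" "norm q < r" "dist x q \<le> \<epsilon> * norm q"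
    "near (h x) l \<delta>"
proof -
  obtain x a b where x: "\<And>k. x k \<in> W \<inter> U - {0}" "x \<longlonglongrightarrow> 0"
      "(\<lambda>k. x k /\<^sub>R norm (x k)) \<longlonglongrightarrow> a" "a \<in> m" "(\<lambda>k. h (x k) /\<^sub>R norm (h (x k))) \<longlonglongrightarrow> b" "b \<in> l"
    using R unfolding carries_direction_def by blast
  have "norm (x k /\<^sub>R norm (x k)) = 1" for k using x(1)[of k] by simp
  then have na: "norm a = 1" using norm_limit_of_unit_sequence[OF _ x(3)] by blast
  have "\<forall>\<^sub>F k in sequentially. norm (x k) < r \<and> dist (x k /\<^sub>R norm (x k)) a < \<epsilon> \<and>
      dist (h (x k) /\<^sub>R norm (h (x k))) b < \<delta>"
    using tendstoD[OF x(2) pos(3)] tendstoD[OF x(3) pos(1)] tendstoD[OF x(5) pos(2)]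
    by eventually_elim simp
  then obtain k where k: "norm (x k) < r" "dist (x k /\<^sub>R norm (x k)) a < \<epsilon>"
      "dist (h (x k) /\<^sub>R norm (h (x k))) b < \<delta>"
    unfolding eventually_sequentially by blast
  define q where "q = norm (x k) *\<^sub>R a"
  have x0: "x k \<in> W" "x k \<noteq> 0" "h (x k) \<noteq> 0" using x(1)[of k] h by auto
  have nq: "norm q = norm (x k)" using na by (simp add: q_def)
  have "dist (x k) q = norm (x k) * dist (x k /\<^sub>R norm (x k)) a"
    unfolding q_def by (rule dist_scaleR_norm[OF x0(2)])
  also have "\<dots> \<le> \<epsilon> * norm q"
    using mult_right_mono[OF less_imp_le[OF k(2)] norm_ge_zero[of "x k"]] nq by (simp add: mult.commute)
  finally have "dist (x k) q \<le> \<epsilon> * norm q" .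
  moreover have "near (h (x k)) l \<delta>"
    using near_scaleR_norm[OF x0(3) k(3)] complex_line_scaleR[OF lines(2) x(6)] by blast
  moreover have "q \<in> m" "q \<noteq> 0" "norm q < r"
    using complex_line_scaleR[OF lines(1) x(4)] nq x0(2) k(1) by (auto simp: q_def)
  ultimately show ?thesis using that x0(1) by blast
qed

text \<open>Points of W1 near a point q of the punctured disc Q of m are sent near a single line of L,
  and this line depends locally constantly on q; as Q is connected, it is determined by m.\<close>
lemma carries_direction_unique:
  fixes h :: "complex^'n \<Rightarrow> complex^'n"
  assumes bl: "bilipschitz_on K1 K2 U h" and U: "open U" "0 \<in> U" and h0: "h 0 = 0"
    and hW: "h ` (W1 \<inter> U) \<subseteq> W2" and m: "complex_line m" "approximates_line W1 m"
    and L: "\<forall>l\<in>L. complex_line l" "lines_separated c L" "c > 0"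
    and near_L: "\<forall>d>0. \<exists>r>0. \<forall>y\<in>W2. y \<noteq> 0 \<and> norm y < r \<longrightarrow> (\<exists>l\<in>L. near y l d)"
    and R: "carries_direction h U W1 m l1" "carries_direction h U W1 m l2" "l1 \<in> L" "l2 \<in> L"
  shows "l1 = l2"
proof -
  have K: "0 < K1" "K1 \<le> K2" using bl unfolding bilipschitz_on_def by auto
  define \<delta> where "\<delta> = c * K1 / (32 * K2)"
  define \<epsilon> where "\<epsilon> = min (1/4) (c * K1 / (128 * K2))"
  have \<delta>: "\<delta> > 0" using L(3) K by (simp add: \<delta>_def)
  have \<epsilon>: "\<epsilon> > 0" "\<epsilon> \<le> 1/4" "\<epsilon> \<le> c * K1 / (128 * K2)" using L(3) K by (auto simp: \<epsilon>_def)
  obtain r2 where r2: "r2 > 0" "\<And>y. y \<in> W2 \<Longrightarrow> y \<noteq> 0 \<Longrightarrow> norm y < r2 \<Longrightarrow> \<exists>l\<in>L. near y l \<delta>"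
    using near_L \<delta> by metis
  obtain r1 where r1: "r1 > 0" "\<And>q. q \<in> m \<Longrightarrow> q \<noteq> 0 \<Longrightarrow> norm q < r1 \<Longrightarrow> \<exists>x\<in>W1. dist x q \<le> \<epsilon> * norm q"
    using m(2) \<epsilon>(1) unfolding approximates_line_def by metis
  obtain rU where rU: "rU > 0" "ball 0 rU \<subseteq> U" using U open_contains_ball by blast
  define r where "r = min r1 (min (rU/2) (r2 / (2 * K2)))"
  have r: "r > 0" using r1 rU r2 K by (simp add: r_def)
  define Q where "Q = {q\<in>m. q \<noteq> 0 \<and> norm q < r}"
  define S where "S q l \<longleftrightarrow> l \<in> L \<and> (\<exists>x\<in>W1. dist x q \<le> \<epsilon> * norm q \<and> near (h x) l \<delta>)" for q l
  have image: "x \<in> U \<and> h x \<in> W2 \<and> h x \<noteq> 0 \<and> norm (h x) < r2"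
    if q: "q \<in> Q" and x: "x \<in> W1" "dist x q \<le> \<epsilon> * norm q" for q x
  proof -
    have "\<epsilon> * norm q \<le> 1/4 * norm q" by (rule mult_right_mono[OF \<epsilon>(2) norm_ge_zero])
    then have q': "dist x q \<le> norm q / 4" "norm q < rU / 2" "q \<noteq> 0" "norm q < r2 / (2 * K2)"
      using q x(2) by (linarith, auto simp: Q_def r_def)
    note img = bilipschitz_image_near_point[OF bl rU(2) h0 q'(1-3)]
    have "norm (h x) < r2"
      using img(4) q'(4) K by (simp add: field_simps)
    then show ?thesis using img hW x(1) by blast
  qed
  have S_exists: "\<exists>l. S q l" if q: "q \<in> Q" for q
  proof -
    obtain x where "x \<in> W1" "dist x q \<le> \<epsilon> * norm q" using r1(2) q by (auto simp: Q_def r_def)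
    with r2(2) image[OF q] show ?thesis unfolding S_def by blast
  qed
  have S_locally_unique: "\<exists>e>0. \<forall>q'\<in>Q. dist q' q < e \<longrightarrow> (\<forall>l l'. S q l \<longrightarrow> S q' l' \<longrightarrow> l = l')"
    if q: "q \<in> Q" for q
  proof (intro exI conjI ballI impI allI)
    show "\<epsilon> * norm q > 0" using \<epsilon>(1) q by (simp add: Q_def)
    fix q' l l' assume q': "q' \<in> Q" "dist q' q < \<epsilon> * norm q" and S: "S q l" "S q' l'"
    obtain x x' where x: "x \<in> W1" "dist x q \<le> \<epsilon> * norm q" "near (h x) l \<delta>"
      and x': "x' \<in> W1" "dist x' q' \<le> \<epsilon> * norm q'" "near (h x') l' \<delta>"
      using S unfolding S_def by blast
    have "near (h x') l (c - \<delta>)"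
      using image[OF q x(1,2)] image[OF q'(1) x'(1,2)] q q'(2)
      by (intro bilipschitz_near_transfer[OF bl _ _ U(2) h0 L(3) \<delta>_def \<epsilon> _ x(2) x'(2) _ x(3)])
        (auto simp: Q_def dist_commute)
    moreover have "l \<in> L" "l' \<in> L" using S unfolding S_def by auto
    ultimately show "l = l'"
      using lines_separated_not_near_both[OF L(2) _ _ _ _ x'(3), of l] by fastforce
  qed
  have S_from_direction: "\<exists>q\<in>Q. S q l" if Rl: "carries_direction h U W1 m l" and lL: "l \<in> L" for l
  proof -
    have "h x \<noteq> 0" if "x \<in> U - {0}" for x
      using bilipschitz_on_nonzero[OF bl _ U(2) h0] that by auto
    then obtain x q where "x \<in> W1" "q \<in> m" "q \<noteq> 0" "norm q < r" "dist x q \<le> \<epsilon> * norm q"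
      "near (h x) l \<delta>"
      using carries_direction_witness[OF Rl m(1) L(1)[rule_format, OF lL] _ \<epsilon>(1) \<delta> r] by metis
    then show ?thesis using lL unfolding S_def Q_def by blast
  qed
  have "connected Q"
    unfolding Q_def by (rule connected_punctured_complex_line_ball[OF m(1)])
  obtain q1 q2 where "q1 \<in> Q" "q2 \<in> Q" "S q1 l1" "S q2 l2"
    using S_from_direction[OF R(1,3)] S_from_direction[OF R(2,4)] by auto
  then show ?thesis
    using connected_locally_functional_relation[where Q=Q and R=S] \<open>connected Q\<close> S_exists S_locally_unique
    by blast
qed

section \<open>Analytic curves approximate their tangent lines\<close>

lemma holomorphic_curve_norm_max_imp_constant:
  fixes g :: "complex \<Rightarrow> complex^'n"
  assumes hol: "\<forall>i. (\<lambda>z. g z $ i) holomorphic_on ball 0 e" and e: "e > 0"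
    and max: "\<forall>z\<in>ball 0 e. norm (g z) \<le> norm (g 0)"
  shows "\<forall>z\<in>ball 0 e. g z = g 0"
proof
  fix z :: complex assume z: "z \<in> ball 0 e"
  define G where "G w = cinner (g w) (g 0)" for w
  have G0: "G 0 = complex_of_real ((norm (g 0))\<^sup>2)" by (simp add: G_def cinner_self)
  have "norm (G w) \<le> norm (G 0)" if "w \<in> ball 0 e" for w
  proof -
    have "norm (G w) \<le> norm (g w) * norm (g 0)" unfolding G_def by (rule norm_cinner_le)
    also have "\<dots> \<le> norm (g 0) * norm (g 0)" using max that by (intro mult_right_mono) auto
    also have "\<dots> = norm (G 0)" by (simp only: G0 norm_of_real) (simp add: power2_eq_square)
    finally show ?thesis .
  qed
  then have "G constant_on ball 0 e"
    using maximum_modulus_principle[of G "ball 0 e" "ball 0 e" 0] holomorphic_on_cinner[OF hol] e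
    unfolding G_def by auto
  then have "G z = G 0" using z e unfolding constant_on_def by (metis centre_in_ball)
  then have "(norm (g z - g 0))\<^sup>2 = (norm (g z))\<^sup>2 - (norm (g 0))\<^sup>2"
    using power2_norm_diff_cinner[of "g z" "g 0"] G0 by (simp add: G_def)
  also have "\<dots> \<le> 0" using max z by (simp add: power_mono)
  finally show "g z = g 0" by simp
qed

text \<open>Relative closedness in U is all that is kept of the defining holomorphic equations.\<close>
definition curve_germ_rep :: "(complex^'n) set \<Rightarrow> (complex^'n) set \<Rightarrow> real \<Rightarrow> bool" where
  "curve_germ_rep W U r \<longleftrightarrow> open U \<and> 0 \<in> U \<and> r > 0 \<and>
     (\<forall>x s. (\<forall>k. s k \<in> W) \<longrightarrow> s \<longlonglongrightarrow> x \<longrightarrow> x \<in> U \<longrightarrow> x \<in> W) \<and>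
     complex_curve_manifold (W \<inter> ball 0 r - {0})"

lemma analytic_curve_germ_rep:
  assumes "analytic_curve_germ_at0 W"
  obtains U r where "curve_germ_rep W U r"
proof -
  obtain U F where U: "open U" "0 \<in> U" "\<forall>f\<in>F. holomorphic_several f U"
    "W \<inter> U = {z\<in>U. \<forall>f\<in>F. f z = 0}"
    using assms unfolding analytic_curve_germ_at0_def analytic_germ_at0_def by blast
  obtain r where r: "r > 0" "complex_curve_manifold (W \<inter> ball 0 r - {0})"
    using assms unfolding analytic_curve_germ_at0_def by blast
  have "x \<in> W" if s: "\<forall>k. s k \<in> W" "s \<longlonglongrightarrow> x" and x: "x \<in> U" for x s
  proof -
    have ev: "\<forall>\<^sub>F k in sequentially. s k \<in> U" using topological_tendstoD[OF s(2) U(1) x] .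
    have "f x = 0" if f: "f \<in> F" for f
    proof -
      obtain f' where "(f has_derivative f') (at x)"
        using U(3) f x unfolding holomorphic_several_def by blast
      then have "(\<lambda>k. f (s k)) \<longlonglongrightarrow> f x"
        by (rule isCont_tendsto_compose[OF has_derivative_continuous s(2)])
      moreover have "\<forall>\<^sub>F k in sequentially. f (s k) = 0"
        using ev by eventually_elim (use s(1) U(4) f in blast)
      then have "(\<lambda>k. f (s k)) \<longlonglongrightarrow> 0" by (rule tendsto_eventually)
      ultimately show ?thesis by (rule LIMSEQ_unique)
    qed
    then show ?thesis using U(4) x by blast
  qed
  then show ?thesis using that U(1,2) r unfolding curve_germ_rep_def by blast
qed

lemma curve_germ_rep_chart:
  fixes W :: "(complex^'n) set"
  assumes rep: "curve_germ_rep W U r" and p: "p \<in> W" "p \<noteq> 0" "norm p < r"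
  obtains e \<rho> and g :: "complex \<Rightarrow> complex^'n" where "e > 0" "\<rho> > 0"
    "\<forall>i. (\<lambda>z. g z $ i) holomorphic_on ball 0 e" "continuous_on (ball 0 e) g" "inj_on g (ball 0 e)"
    "g 0 = p" "g ` ball 0 e \<subseteq> W" "W \<inter> ball p \<rho> \<subseteq> g ` ball 0 e"
proof -
  let ?C = "W \<inter> ball 0 r - {0}"
  obtain \<rho> e g g' where c: "\<rho> > 0" "e > 0" "\<forall>i. (\<lambda>z. g z $ i) holomorphic_on ball 0 e" "g 0 = p"
    "homeomorphism (ball 0 e) (?C \<inter> ball p \<rho>) g g'"
  proof -
    have "p \<in> ?C" using p by simp
    then show ?thesis
      using that rep unfolding curve_germ_rep_def complex_curve_manifold_def by blast
  qed
  have hm: "g ` ball 0 e = ?C \<inter> ball p \<rho>" "continuous_on (ball 0 e) g"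
    using c(5) unfolding homeomorphism_def by auto
  have "inj_on g (ball 0 e)" by (rule inj_on_inverseI[of _ g']) (rule homeomorphism_apply1[OF c(5)])
  define \<rho>' where "\<rho>' = min \<rho> (min (norm p) (r - norm p))"
  have "\<rho>' > 0" using c(1) p by (simp add: \<rho>'_def)
  moreover have "W \<inter> ball p \<rho>' \<subseteq> g ` ball 0 e"
  proof
    fix y assume y: "y \<in> W \<inter> ball p \<rho>'"
    then have "norm y < r" "y \<noteq> 0"
      using norm_triangle_ineq2[of y p] norm_triangle_ineq3[of p y]
      by (auto simp: \<rho>'_def dist_norm norm_minus_commute)
    then show "y \<in> g ` ball 0 e" using y hm(1) by (auto simp: \<rho>'_def)
  qed
  moreover have "g ` ball 0 e \<subseteq> W" using hm(1) by auto
  moreover note \<open>inj_on g (ball 0 e)\<close>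
  ultimately show ?thesis using that[OF c(2) _ c(3) hm(2) _ c(4)] by blast
qed

lemma curve_germ_rep_no_local_norm_max:
  fixes W :: "(complex^'n) set"
  assumes rep: "curve_germ_rep W U r" and p: "p \<in> W" "p \<noteq> 0" "norm p < r"
    and \<eta>: "\<eta> > 0" "\<forall>y\<in>W. dist y p < \<eta> \<longrightarrow> norm y \<le> norm p"
  shows False
proof -
  obtain e \<rho> and g :: "complex \<Rightarrow> complex^'n" where c: "e > 0" "\<rho> > 0"
    "\<forall>i. (\<lambda>z. g z $ i) holomorphic_on ball 0 e" "continuous_on (ball 0 e) g" "inj_on g (ball 0 e)"
    "g 0 = p" "g ` ball 0 e \<subseteq> W" "W \<inter> ball p \<rho> \<subseteq> g ` ball 0 e"
    by (rule curve_germ_rep_chart[OF rep p])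
  have "0 \<in> ball (0::complex) e" using c(1) by simp
  from c(4)[unfolded continuous_on_iff, rule_format, OF this \<eta>(1)]
  obtain e1 where e1: "e1 > 0" "\<forall>z\<in>ball 0 e. dist z 0 < e1 \<longrightarrow> dist (g z) p < \<eta>"
    using c(6) by auto
  define e2 where "e2 = min e e1"
  have e2: "e2 > 0" "ball 0 e2 \<subseteq> ball 0 e" using e1 c(1) by (auto simp: e2_def)
  have max: "\<forall>z\<in>ball 0 e2. norm (g z) \<le> norm (g 0)"
  proof
    fix z :: complex assume z: "z \<in> ball 0 e2"
    have "z \<in> ball 0 e" "dist z 0 < e1" using z by (auto simp: e2_def dist_commute)
    then have "dist (g z) p < \<eta>" "g z \<in> W" using e1(2) c(7) by auto
    then show "norm (g z) \<le> norm (g 0)" using \<eta>(2) c(6) by auto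
  qed
  have hol: "\<forall>i. (\<lambda>z. g z $ i) holomorphic_on ball 0 e2"
    using c(3) e2(2) holomorphic_on_subset by blast
  note const = holomorphic_curve_norm_max_imp_constant[OF hol e2(1) max]
  define z0 where "z0 = complex_of_real (e2 / 2)"
  have z0: "z0 \<in> ball 0 e2" "z0 \<noteq> 0" using e2(1) by (auto simp: z0_def)
  have "z0 \<in> ball 0 e" "(0::complex) \<in> ball 0 e" using z0(1) e2(2) c(1) by (blast, simp)
  with const z0(1) have "z0 = 0" by (intro inj_onD[OF c(5)]) blast+
  with z0(2) show False by simp
qed

lemma curve_germ_rep_no_compact_open_piece:
  fixes W :: "(complex^'n) set"
  assumes rep: "curve_germ_rep W U r" and E: "compact E" "E \<noteq> {}" "E \<subseteq> W"
    "\<forall>x\<in>E. x \<noteq> 0 \<and> norm x < r" "\<forall>x\<in>E. \<exists>\<eta>>0. \<forall>y\<in>W. dist y x < \<eta> \<longrightarrow> y \<in> E"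
  shows False
proof -
  obtain p where p: "p \<in> E" "\<forall>y\<in>E. norm y \<le> norm p"
    using continuous_attains_sup[OF E(1,2), of norm] by (auto intro: continuous_intros)
  obtain \<eta> where "\<eta> > 0" "\<forall>y\<in>W. dist y p < \<eta> \<longrightarrow> y \<in> E" using E(5) p(1) by blast
  then show False using curve_germ_rep_no_local_norm_max[OF rep, of p \<eta>] p E(3,4) by blast
qed

text \<open>The coordinate along m maps the branch of W near m onto a punctured disc: the image is open
  by the open mapping theorem and relatively closed by compactness.\<close>
locale tangent_branch =
  fixes W U :: "(complex^'n) set" and r :: real and M :: "(complex^'n) set set"
    and m :: "(complex^'n) set" and a :: "complex^'n" and \<delta> R0 c :: real
  assumes rep: "curve_germ_rep W U r"
    and R0: "R0 > 0" "ball 0 R0 \<subseteq> U" "R0 \<le> r"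
    and a: "norm a = 1" "m = {z *s a | z. True}" "m \<in> M"
    and near_M: "\<forall>y\<in>W. y \<noteq> 0 \<and> norm y < R0 \<longrightarrow> (\<exists>l\<in>M. near y l \<delta>)"
    and sep: "lines_separated c M"
    and \<delta>: "\<delta> > 0" "\<delta> \<le> 1/4" "2 * \<delta> \<le> c"
begin

definition branch :: "(complex^'n) set" where
  "branch = {x \<in> W. x \<noteq> 0 \<and> norm x < R0 \<and> near x m \<delta>}"

definition coord :: "complex^'n \<Rightarrow> complex" where
  "coord x = cinner x a"

lemma tendsto_coord: "s \<longlonglongrightarrow> x \<Longrightarrow> (\<lambda>k. coord (s k)) \<longlonglongrightarrow> coord x"
  unfolding coord_def by (rule tendsto_cinner)

lemma norm_coord_le: "cmod (coord x) \<le> norm x"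
  using norm_cinner_le[of x a] a(1) by (simp add: coord_def)

lemma branch_norm_bounds:
  assumes "x \<in> branch"
  shows "norm x \<le> 2 * cmod (coord x)" "norm (x - coord x *s a) \<le> 2 * \<delta> * norm x"
proof -
  have n: "near x m \<delta>" using assms by (simp add: branch_def)
  have "(1/2) * norm x \<le> (1 - 2 * \<delta>) * norm x" using \<delta> by (intro mult_right_mono) auto
  then show "norm x \<le> 2 * cmod (coord x)"
    using near_complex_line_cinner(1)[OF a(1,2) n] by (simp add: coord_def)
  show "norm (x - coord x *s a) \<le> 2 * \<delta> * norm x"
    using near_complex_line_cinner(2)[OF a(1,2) n] by (simp add: coord_def)
qed

lemma W_limit:
  assumes "\<And>k. s k \<in> W" "s \<longlonglongrightarrow> x" "norm x < R0"
  shows "x \<in> W"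
proof -
  have "x \<in> U" using R0(2) assms(3) by auto
  then show ?thesis using rep assms(1,2) unfolding curve_germ_rep_def by blast
qed

lemma branch_locally_open:
  assumes "x \<in> branch"
  shows "\<exists>\<eta>>0. \<forall>y\<in>W. dist y x < \<eta> \<longrightarrow> y \<in> branch"
proof -
  have x: "x \<noteq> 0" "norm x < R0" "near x m \<delta>" using assms by (auto simp: branch_def)
  obtain \<eta>1 where \<eta>1: "\<eta>1 > 0" "\<forall>y. dist y x < \<eta>1 \<longrightarrow> near y m \<delta>"
    using near_stable[OF x(3) \<delta>(1)] by blast
  define \<eta> where "\<eta> = min \<eta>1 (min (norm x) (R0 - norm x))"
  have "y \<in> branch" if "y \<in> W" "dist y x < \<eta>" for y
    using that \<eta>1(2) norm_triangle_ineq2[of y x] norm_triangle_ineq3[of x y]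
    unfolding branch_def \<eta>_def by (auto simp: dist_norm norm_minus_commute)
  moreover have "\<eta> > 0" using \<eta>1(1) x by (simp add: \<eta>_def)
  ultimately show ?thesis by blast
qed

lemma branch_limit:
  assumes s: "\<And>k. s k \<in> branch" "s \<longlonglongrightarrow> x" and x: "x \<in> W" "x \<noteq> 0" "norm x < R0"
  shows "x \<in> branch"
proof -
  obtain l where l: "l \<in> M" "near x l \<delta>" using near_M x by blast
  obtain \<eta> where \<eta>: "\<eta> > 0" "\<forall>y. dist y x < \<eta> \<longrightarrow> near y l \<delta>"
    using near_stable[OF l(2) \<delta>(1)] by blast
  obtain N where "dist (s N) x < \<eta>"
    using tendstoD[OF s(2) \<eta>(1)] unfolding eventually_sequentially by blast
  then have "near (s N) l \<delta>" "near (s N) m \<delta>" using \<eta>(2) s(1)[of N] by (auto simp: branch_def)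
  then have "l = m"
    using lines_separated_not_near_both[OF sep l(1) a(3)] \<delta>(3) by fastforce
  then show ?thesis using l x unfolding branch_def by simp
qed

lemma branch_chart:
  assumes "p \<in> branch"
  obtains e \<rho> and g :: "complex \<Rightarrow> complex^'n" where "e > 0" "\<rho> > 0"
    "\<forall>i. (\<lambda>z. g z $ i) holomorphic_on ball 0 e" "continuous_on (ball 0 e) g" "inj_on g (ball 0 e)"
    "g 0 = p" "g ` ball 0 e \<subseteq> W" "W \<inter> ball p \<rho> \<subseteq> g ` ball 0 e"
proof -
  have "p \<in> W" "p \<noteq> 0" "norm p < r" using assms R0(3) by (auto simp: branch_def)
  then show ?thesis using that by (rule curve_germ_rep_chart[OF rep])
qed

lemma holomorphic_on_coord_chart:
  "\<forall>i. (\<lambda>z. g z $ i) holomorphic_on S \<Longrightarrow> (\<lambda>z. coord (g z)) holomorphic_on S"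
  unfolding coord_def by (rule holomorphic_on_cinner)

lemma coord_chart_constant_extend:
  fixes g :: "complex \<Rightarrow> complex^'n"
  assumes hol: "\<forall>i. (\<lambda>z. g z $ i) holomorphic_on ball 0 e" and cont: "continuous_on (ball 0 e) g"
    and gW: "g ` ball 0 e \<subseteq> W" and z0: "z0 \<in> ball 0 e"
    and \<eta>: "\<eta> > 0" "\<forall>y\<in>W. dist y (g z0) < \<eta> \<longrightarrow> coord y = w"
  shows "\<forall>z\<in>ball 0 e. coord (g z) = w"
proof -
  obtain \<rho> where \<rho>: "\<rho> > 0" "\<forall>z\<in>ball 0 e. dist z z0 < \<rho> \<longrightarrow> dist (g z) (g z0) < \<eta>"
    using cont z0 \<eta>(1) unfolding continuous_on_iff by blast
  define S where "S = ball z0 \<rho> \<inter> ball 0 e"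
  have S: "open S" "z0 \<in> S" "S \<subseteq> ball 0 e" using z0 \<rho>(1) by (auto simp: S_def)
  have "coord (g z) = w" if "z \<in> S" for z
  proof -
    have "z \<in> ball 0 e" "dist z z0 < \<rho>" using that by (auto simp: S_def dist_commute)
    then have "dist (g z) (g z0) < \<eta>" "g z \<in> W" using \<rho>(2) gW by auto
    then show ?thesis using \<eta>(2) by blast
  qed
  then show ?thesis
    using analytic_continuation_open[OF S(1) open_ball _ convex_connected[OF convex_ball] S(3)
        holomorphic_on_coord_chart[OF hol] holomorphic_on_const] S(2) by blast
qed

definition level_piece :: "complex \<Rightarrow> (complex^'n) set" where
  "level_piece w = {x \<in> branch. \<exists>\<eta>>0. \<forall>y\<in>W. dist y x < \<eta> \<longrightarrow> coord y = w}"

lemma level_piece_coord: "x \<in> level_piece w \<Longrightarrow> coord x = w"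
  unfolding level_piece_def branch_def by force

lemma level_piece_norm:
  assumes "x \<in> level_piece w"
  shows "cmod w \<le> norm x" "norm x \<le> 2 * cmod w"
  using assms branch_norm_bounds(1)[of x] norm_coord_le[of x] level_piece_coord[OF assms]
  by (auto simp: level_piece_def)

lemma level_piece_locally_open:
  assumes x: "x \<in> level_piece w"
  shows "\<exists>\<eta>>0. \<forall>y\<in>W. dist y x < \<eta> \<longrightarrow> y \<in> level_piece w"
proof -
  have "x \<in> branch" using x by (simp add: level_piece_def)
  then obtain \<eta>1 where \<eta>1: "\<eta>1 > 0" "\<forall>y\<in>W. dist y x < \<eta>1 \<longrightarrow> y \<in> branch"
    using branch_locally_open by blast
  obtain \<eta>2 where \<eta>2: "\<eta>2 > 0" "\<forall>y\<in>W. dist y x < \<eta>2 \<longrightarrow> coord y = w"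
    using x unfolding level_piece_def by blast
  have "y \<in> level_piece w" if y: "y \<in> W" "dist y x < min \<eta>1 (\<eta>2 / 2)" for y
  proof -
    have "\<forall>y'\<in>W. dist y' y < \<eta>2 / 2 \<longrightarrow> coord y' = w"
    proof (intro ballI impI)
      fix y' assume "y' \<in> W" "dist y' y < \<eta>2 / 2"
      then have "dist y' x < \<eta>2" using y(2) dist_triangle[of y' x y] by simp
      then show "coord y' = w" using \<eta>2(2) \<open>y' \<in> W\<close> by blast
    qed
    moreover have "y \<in> branch" using \<eta>1(2) y by simp
    moreover have "\<eta>2 / 2 > 0" using \<eta>2(1) by simp
    ultimately show ?thesis unfolding level_piece_def by blast
  qed
  moreover have "min \<eta>1 (\<eta>2 / 2) > 0" using \<eta>1(1) \<eta>2(1) by simp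
  ultimately show ?thesis by blast
qed

lemma level_piece_limit:
  assumes x: "x \<in> branch" and s: "\<forall>k. s k \<in> level_piece w" "s \<longlonglongrightarrow> x"
  shows "x \<in> level_piece w"
proof -
  obtain e \<rho> and g :: "complex \<Rightarrow> complex^'n" where c: "e > 0" "\<rho> > 0"
    "\<forall>i. (\<lambda>z. g z $ i) holomorphic_on ball 0 e" "continuous_on (ball 0 e) g"
    "g ` ball 0 e \<subseteq> W" "W \<inter> ball x \<rho> \<subseteq> g ` ball 0 e"
    using x by (rule branch_chart) blast
  obtain N where "dist (s N) x < \<rho>"
    using tendstoD[OF s(2) c(2)] unfolding eventually_sequentially by blast
  moreover have "s N \<in> W" using s(1) by (simp add: level_piece_def branch_def)
  ultimately obtain z where z: "z \<in> ball 0 e" "g z = s N" using c(6) by (auto simp: dist_commute)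
  obtain \<eta> where "\<eta> > 0" "\<forall>y\<in>W. dist y (g z) < \<eta> \<longrightarrow> coord y = w"
    using s(1) z(2) unfolding level_piece_def by auto
  then have gw: "\<forall>z\<in>ball 0 e. coord (g z) = w"
    by (rule coord_chart_constant_extend[OF c(3,4,5) z(1)])
  have "\<forall>y\<in>W. dist y x < \<rho> \<longrightarrow> coord y = w"
  proof (intro ballI impI)
    fix y assume "y \<in> W" "dist y x < \<rho>"
    then have "y \<in> g ` ball 0 e" using c(6) by (auto simp: dist_commute)
    then show "coord y = w" using gw by auto
  qed
  then show "x \<in> level_piece w" using x c(2) unfolding level_piece_def by blast
qed

lemma closed_level_piece:
  assumes w: "w \<noteq> 0" "cmod w < R0 / 4"
  shows "closed (level_piece w)"
  unfolding closed_sequential_limits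
proof (intro allI impI, elim conjE)
  fix s x assume s: "\<forall>k. s k \<in> level_piece w" and lim: "s \<longlonglongrightarrow> x"
  have "(\<lambda>k. coord (s k)) = (\<lambda>k. w)" using s level_piece_coord by auto
  then have "(\<lambda>k. coord (s k)) \<longlonglongrightarrow> w" by simp
  then have "coord x = w" using tendsto_coord[OF lim] LIMSEQ_unique by blast
  then have "x \<noteq> 0" using norm_coord_le[of x] w(1) by auto
  have "norm x \<le> 2 * cmod w"
    using s level_piece_norm(2) by (intro Lim_norm_ubound[OF trivial_limit_sequentially lim]) auto
  then have "norm x < R0" using w(2) R0(1) by linarith
  have "\<And>k. s k \<in> branch" using s by (simp add: level_piece_def)
  moreover from this have "x \<in> W"
    using W_limit[OF _ lim \<open>norm x < R0\<close>] by (simp add: branch_def)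
  ultimately have "x \<in> branch"
    using branch_limit[OF _ lim _ \<open>x \<noteq> 0\<close> \<open>norm x < R0\<close>] by blast
  then show "x \<in> level_piece w" using level_piece_limit s lim by blast
qed

text \<open>Otherwise the level piece through x0 would be a nonempty compact and relatively open subset
  of the punctured curve, and its point of largest norm would violate the maximum principle.\<close>
lemma coord_chart_not_constant:
  fixes g :: "complex \<Rightarrow> complex^'n"
  assumes x0: "x0 \<in> branch" "cmod (coord x0) < R0 / 4"
    and c: "e > 0" "\<rho> > 0" "g 0 = x0" "g ` ball 0 e \<subseteq> W" "W \<inter> ball x0 \<rho> \<subseteq> g ` ball 0 e"
  shows "\<not> (\<lambda>z. coord (g z)) constant_on ball 0 e"
proof
  assume "(\<lambda>z. coord (g z)) constant_on ball 0 e"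
  then have gw: "\<forall>z\<in>ball 0 e. coord (g z) = coord x0"
    using c(1,3) unfolding constant_on_def by (metis centre_in_ball)
  define E where "E = level_piece (coord x0)"
  have "\<forall>y\<in>W. dist y x0 < \<rho> \<longrightarrow> coord y = coord x0"
  proof (intro ballI impI)
    fix y assume "y \<in> W" "dist y x0 < \<rho>"
    then have "y \<in> g ` ball 0 e" using c(5) by (auto simp: dist_commute)
    then show "coord y = coord x0" using gw by auto
  qed
  then have "x0 \<in> E" using x0(1) c(2) unfolding E_def level_piece_def by blast
  have "coord x0 \<noteq> 0" using branch_norm_bounds(1)[OF x0(1)] x0(1) by (auto simp: branch_def)
  have "bounded E" using level_piece_norm(2) by (auto simp: E_def bounded_iff)
  then have "compact E"
    using closed_level_piece[OF \<open>coord x0 \<noteq> 0\<close> x0(2)] by (simp add: E_def compact_eq_bounded_closed)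
  moreover have "E \<subseteq> W" "\<forall>x\<in>E. x \<noteq> 0 \<and> norm x < r"
    using R0(3) by (auto simp: E_def level_piece_def branch_def)
  moreover have "\<forall>x\<in>E. \<exists>\<eta>>0. \<forall>y\<in>W. dist y x < \<eta> \<longrightarrow> y \<in> E"
    unfolding E_def using level_piece_locally_open by blast
  ultimately show False
    using curve_germ_rep_no_compact_open_piece[OF rep] \<open>x0 \<in> E\<close> by blast
qed

lemma coord_image_open:
  assumes w: "w \<in> coord ` branch" "cmod w < R0 / 4"
  shows "\<exists>d>0. ball w d \<subseteq> coord ` branch"
proof -
  obtain x0 where x0: "x0 \<in> branch" "coord x0 = w" using w(1) by blast
  obtain e \<rho> and g :: "complex \<Rightarrow> complex^'n" where c: "e > 0" "\<rho> > 0"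
    "\<forall>i. (\<lambda>z. g z $ i) holomorphic_on ball 0 e" "continuous_on (ball 0 e) g" "inj_on g (ball 0 e)"
    "g 0 = x0" "g ` ball 0 e \<subseteq> W" "W \<inter> ball x0 \<rho> \<subseteq> g ` ball 0 e"
    by (rule branch_chart[OF x0(1)])
  have hol: "(\<lambda>z. coord (g z)) holomorphic_on ball 0 e" by (rule holomorphic_on_coord_chart[OF c(3)])
  have nc: "\<not> (\<lambda>z. coord (g z)) constant_on ball 0 e"
    using coord_chart_not_constant[OF x0(1) _ c(1,2,6,7,8)] x0(2) w(2) by blast
  obtain \<eta> where \<eta>: "\<eta> > 0" "\<forall>y\<in>W. dist y x0 < \<eta> \<longrightarrow> y \<in> branch"
    using branch_locally_open[OF x0(1)] by blast
  have "0 \<in> ball (0::complex) e" using c(1) by simp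
  from c(4)[unfolded continuous_on_iff, rule_format, OF this \<eta>(1)]
  obtain e1 where e1: "e1 > 0" "\<forall>z\<in>ball 0 e. dist z 0 < e1 \<longrightarrow> dist (g z) x0 < \<eta>"
    using c(6) by auto
  define e2 where "e2 = min e e1"
  have e2: "e2 > 0" "ball 0 e2 \<subseteq> ball 0 e" using e1 c(1) by (auto simp: e2_def)
  have branch_g: "g z \<in> branch" if z: "z \<in> ball 0 e2" for z
  proof -
    have "z \<in> ball 0 e" "dist z 0 < e1" using z by (auto simp: e2_def dist_commute)
    then have "dist (g z) x0 < \<eta>" "g z \<in> W" using e1(2) c(7) by auto
    then show ?thesis using \<eta>(2) by blast
  qed
  have "open ((\<lambda>z. coord (g z)) ` ball 0 e2)"
    by (rule open_mapping_thm[OF hol open_ball connected_ball open_ball e2(2) nc])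
  moreover have "w \<in> (\<lambda>z. coord (g z)) ` ball 0 e2"
    using e2(1) c(6) x0(2) by (intro image_eqI[of _ _ 0]) auto
  ultimately obtain d where d: "d > 0" "ball w d \<subseteq> (\<lambda>z. coord (g z)) ` ball 0 e2"
    using open_contains_ball by blast
  have "ball w d \<subseteq> coord ` branch" using d(2) branch_g by blast
  then show ?thesis using d(1) by blast
qed

lemma coord_image_closed:
  assumes w: "w \<noteq> 0" "cmod w < R0 / 4" "w \<notin> coord ` branch"
  shows "\<exists>d>0. \<forall>w'. w' \<noteq> 0 \<and> cmod w' < R0 / 4 \<and> dist w' w < d \<longrightarrow> w' \<notin> coord ` branch"
proof (rule ccontr)
  assume contra: "\<not> ?thesis"
  have "\<exists>x. x \<in> branch \<and> cmod (coord x) < R0 / 4 \<and> dist (coord x) w < inverse (real (Suc k))"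
    for k
  proof -
    have "inverse (real (Suc k)) > 0" by simp
    then show ?thesis using contra by blast
  qed
  then obtain xs where xs: "\<And>k. xs k \<in> branch" "\<And>k. cmod (coord (xs k)) < R0 / 4"
    "\<And>k. dist (coord (xs k)) w < inverse (real (Suc k))" by metis
  have "xs k \<in> cball 0 (R0/2)" for k
    using branch_norm_bounds(1)[OF xs(1), of k] xs(2)[of k] by simp
  moreover have "seq_compact (cball (0::complex^'n) (R0/2))" by (simp add: compact_imp_seq_compact)
  ultimately obtain x \<sigma> where x: "x \<in> cball 0 (R0/2)" "strict_mono \<sigma>" "(xs \<circ> \<sigma>) \<longlonglongrightarrow> x"
    unfolding seq_compact_def by metis
  have "(\<lambda>k. coord (xs k) - w) \<longlonglongrightarrow> 0"
  proof (rule Lim_null_comparison)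
    show "\<forall>\<^sub>F k in sequentially. norm (coord (xs k) - w) \<le> inverse (real (Suc k))"
      using xs(3) by (intro always_eventually allI) (simp add: dist_norm less_imp_le)
    show "(\<lambda>k. inverse (real (Suc k))) \<longlonglongrightarrow> 0" by (rule LIMSEQ_inverse_real_of_nat)
  qed
  then have "(\<lambda>k. coord (xs k)) \<longlonglongrightarrow> w" by (simp add: LIM_zero_iff)
  from LIMSEQ_subseq_LIMSEQ[OF this x(2)] have "(\<lambda>k. coord ((xs \<circ> \<sigma>) k)) \<longlonglongrightarrow> w"
    by (simp add: o_def)
  then have "coord x = w" by (rule LIMSEQ_unique[OF tendsto_coord[OF x(3)]])
  moreover have "x \<noteq> 0" using norm_coord_le[of x] w(1) calculation by auto
  moreover have "norm x < R0" using x(1) R0(1) by simp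
  moreover have "\<And>k. (xs \<circ> \<sigma>) k \<in> branch" using xs(1) by simp
  moreover have "x \<in> W"
    using W_limit[OF _ x(3)] \<open>norm x < R0\<close> xs(1) by (simp add: branch_def)
  ultimately have "x \<in> branch" using branch_limit[OF _ x(3)] by blast
  then show False using \<open>coord x = w\<close> w(3) by blast
qed

lemma coord_image_punctured_disc:
  assumes x0: "x0 \<in> branch" "coord x0 \<noteq> 0" "cmod (coord x0) < R0 / 4"
    and w: "w \<noteq> 0" "cmod w < R0 / 4"
  shows "w \<in> coord ` branch"
proof -
  define D where "D = ball (0::complex) (R0/4) - {0}"
  have D: "v \<in> D \<longleftrightarrow> v \<noteq> 0 \<and> cmod v < R0 / 4" for v by (auto simp: D_def)
  have "connected D" unfolding D_def by (rule connected_punctured_ball) simp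
  moreover have "coord x0 \<in> D" "w \<in> D" using x0 w D by auto
  moreover have "\<forall>v\<in>D. \<forall>\<^sub>F v' in at v within D. (v \<in> coord ` branch) = (v' \<in> coord ` branch)"
  proof
    fix v assume v: "v \<in> D"
    show "\<forall>\<^sub>F v' in at v within D. (v \<in> coord ` branch) = (v' \<in> coord ` branch)"
    proof (cases "v \<in> coord ` branch")
      case True
      then obtain d where d: "d > 0" "ball v d \<subseteq> coord ` branch"
        using coord_image_open v D by blast
      then have "\<forall>v'\<in>D. v' \<noteq> v \<and> dist v' v < d \<longrightarrow> v' \<in> coord ` branch"
        by (auto simp: dist_commute subset_iff)
      then show ?thesis using True d(1) unfolding eventually_at by blast
    next
      case False
      then obtain d where "d > 0"
        "\<forall>w'. w' \<noteq> 0 \<and> cmod w' < R0 / 4 \<and> dist w' v < d \<longrightarrow> w' \<notin> coord ` branch"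
        using coord_image_closed v D by blast
      then show ?thesis using False D unfolding eventually_at by blast
    qed
  qed
  ultimately show ?thesis
    using connected_local_const[of D "coord x0" w "\<lambda>v. v \<in> coord ` branch"] x0(1) by blast
qed

lemma branch_meets_small_coords:
  assumes "a \<in> tangent_directions W"
  obtains x0 where "x0 \<in> branch" "coord x0 \<noteq> 0" "cmod (coord x0) < R0 / 4"
proof -
  obtain x where x: "\<And>i. x i \<in> W - {0}" "x \<longlonglongrightarrow> 0" "(\<lambda>i. x i /\<^sub>R norm (x i)) \<longlonglongrightarrow> a"
    using assms unfolding tangent_directions_def by blast
  have "R0 / 4 > 0" using R0(1) by simp
  from tendstoD[OF x(2) this] tendstoD[OF x(3) \<delta>(1)]
  have "\<forall>\<^sub>F k in sequentially. norm (x k) < R0 / 4 \<and> dist (x k /\<^sub>R norm (x k)) a < \<delta>"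
    by eventually_elim simp
  then obtain N where N: "norm (x N) < R0 / 4" "dist (x N /\<^sub>R norm (x N)) a < \<delta>"
    unfolding eventually_sequentially by blast
  have "a \<in> m" using a(2) by (metis (mono_tags) mem_Collect_eq vector_smult_lid)
  moreover have "complex_line m" unfolding complex_line_def using a(1,2) by (intro exI[of _ a]) auto
  ultimately have "norm (x N) *\<^sub>R a \<in> m" by (rule complex_line_scaleR[rotated])
  moreover have xN: "x N \<in> W" "x N \<noteq> 0" using x(1)[of N] by auto
  ultimately have "near (x N) m \<delta>" using near_scaleR_norm[OF _ N(2)] by blast
  then have "x N \<in> branch" using xN N(1) R0(1) unfolding branch_def by simp
  moreover have "coord (x N) \<noteq> 0" using branch_norm_bounds(1)[OF calculation] xN(2) by auto
  moreover have "cmod (coord (x N)) < R0 / 4" using norm_coord_le[of "x N"] N(1) by linarith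
  ultimately show ?thesis by (rule that)
qed

lemma line_near_branch:
  assumes x0: "x0 \<in> branch" "coord x0 \<noteq> 0" "cmod (coord x0) < R0 / 4"
    and q: "q \<in> m" "q \<noteq> 0" "norm q < R0 / 4"
  shows "\<exists>y\<in>W. dist y q \<le> 4 * \<delta> * norm q"
proof -
  obtain z where z: "q = z *s a" using q(1) a(2) by blast
  have nq: "norm q = cmod z" using a(1) by (simp add: z norm_vector_smult)
  then have "z \<in> coord ` branch" using coord_image_punctured_disc[OF x0] q z by auto
  then obtain y where y: "y \<in> branch" "coord y = z" by blast
  have "dist y q = norm (y - coord y *s a)" by (simp add: z y(2) dist_norm)
  also have "\<dots> \<le> 2 * \<delta> * norm y" by (rule branch_norm_bounds(2)[OF y(1)])
  also have "\<dots> \<le> 2 * \<delta> * (2 * norm q)"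
    using branch_norm_bounds(1)[OF y(1)] y(2) nq \<delta>(1) by (intro mult_left_mono) auto
  finally have "dist y q \<le> 4 * \<delta> * norm q" by simp
  with y(1) show ?thesis unfolding branch_def by blast
qed

end

lemma analytic_curve_approximates_tangent_line:
  fixes W :: "(complex^'n) set"
  assumes germ: "analytic_curve_germ_at0 W" and cone: "tangent_cone W = \<Union>M"
    and M: "finite M" "\<forall>l\<in>M. complex_line l" and mM: "m \<in> M"
  shows "approximates_line W m"
  unfolding approximates_line_def
proof (intro allI impI)
  fix e :: real assume e: "e > 0"
  obtain U r where rep: "curve_germ_rep W U r" by (rule analytic_curve_germ_rep[OF germ])
  obtain c where c: "c > 0" "lines_separated c M" by (rule finite_complex_lines_separated[OF M])
  define \<delta> where "\<delta> = min (1/4) (min (e/4) (c/2))"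
  have \<delta>_bounds: "\<delta> > 0" "\<delta> \<le> 1/4" "4 * \<delta> \<le> e" "2 * \<delta> \<le> c"
    using e c by (auto simp: \<delta>_def)
  obtain r1 where r1: "r1 > 0" "\<forall>y\<in>W. y \<noteq> 0 \<and> norm y < r1 \<longrightarrow> (\<exists>l\<in>M. near y l \<delta>)"
    using tangent_cone_lines_near[OF cone M(2) \<delta>_bounds(1)] by blast
  obtain rU where rU: "rU > 0" "ball 0 rU \<subseteq> U"
    using rep open_contains_ball unfolding curve_germ_rep_def by blast
  define R0 where "R0 = min r1 (min rU r)"
  obtain a where a: "norm a = 1" "m = {z *s a | z. True}"
    using complex_line_unit_generator M(2) mM by blast
  interpret tangent_branch W U r M m a \<delta> R0 c
    by unfold_locales (use rep r1 rU a mM c \<delta>_bounds in \<open>auto simp: R0_def curve_germ_rep_def\<close>)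
  have "a \<in> m" using a(2) by (metis (mono_tags) mem_Collect_eq vector_smult_lid)
  then have "a \<in> tangent_directions W"
    using cone mM a(1) unit_tangent_cone_imp_direction by blast
  then obtain x0 where x0: "x0 \<in> branch" "coord x0 \<noteq> 0" "cmod (coord x0) < R0 / 4"
    by (rule branch_meets_small_coords)
  have "\<exists>y\<in>W. dist y q \<le> e * norm q" if "q \<in> m" "q \<noteq> 0 \<and> norm q < R0 / 4" for q
    using line_near_branch[OF x0] that mult_right_mono[OF \<delta>_bounds(3) norm_ge_zero[of q]]
    by (meson order_trans)
  moreover have "R0 / 4 > 0" using R0(1) by simp
  ultimately show "\<exists>r>0. \<forall>q\<in>m. q \<noteq> 0 \<and> norm q < r \<longrightarrow> (\<exists>x\<in>W. dist x q \<le> e * norm q)"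
    by blast
qed

section \<open>Counting the tangent lines\<close>

lemma card_tangent_lines_le:
  fixes h h' :: "complex^'n \<Rightarrow> complex^'n"
  assumes h: "bilipschitz_germ_map h U V" and h': "bilipschitz_germ_map h' V U"
    and inv: "\<forall>x\<in>U. h' (h x) = x" and hW: "h ` (W1 \<inter> U) \<subseteq> W2" and h'W: "h' ` (W2 \<inter> V) \<subseteq> W1"
    and M: "finite M" "\<forall>m\<in>M. complex_line m" "tangent_cone W1 = \<Union>M"
    and L: "finite L" "\<forall>l\<in>L. complex_line l" "tangent_cone W2 = \<Union>L"
    and approx: "\<forall>l\<in>L. approximates_line W2 l"
  shows "card M \<le> card L"
proof -
  obtain K1 K2 where bl: "bilipschitz_on K1 K2 U h"
    by (rule bilipschitz_germ_map_imp_bilipschitz_on[OF h])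
  obtain K1' K2' where bl': "bilipschitz_on K1' K2' V h'"
    by (rule bilipschitz_germ_map_imp_bilipschitz_on[OF h'])
  obtain g where U: "open U" "0 \<in> U" "h 0 = 0" "homeomorphism U V h g"
    using h unfolding bilipschitz_germ_map_def by blast
  have "h ` U \<subseteq> V" using homeomorphism_image1[OF U(4)] by simp
  obtain g' where V: "open V" "0 \<in> V" "h' 0 = 0" "homeomorphism V U h' g'"
    using h' unfolding bilipschitz_germ_map_def by blast
  obtain c where c: "c > 0" "lines_separated c M" by (rule finite_complex_lines_separated[OF M(1,2)])
  have near_M: "\<forall>d>0. \<exists>r>0. \<forall>y\<in>W1. y \<noteq> 0 \<and> norm y < r \<longrightarrow> (\<exists>l\<in>M. near y l d)"
    using tangent_cone_lines_near[OF M(3,2)] by simp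
  define \<phi> where "\<phi> m = (SOME l. l \<in> L \<and> carries_direction h U W1 m l)" for m
  have \<phi>: "\<phi> m \<in> L \<and> carries_direction h U W1 m (\<phi> m)" if "m \<in> M" for m
  proof -
    have "m \<subseteq> tangent_cone W1" using M(3) that by blast
    then have "\<exists>l\<in>L. carries_direction h U W1 m l"
      by (rule carries_direction_exists[OF bl U(1-3) hW M(2)[rule_format, OF that] _ L(3)])
    then show ?thesis unfolding \<phi>_def Bex_def by (rule someI_ex)
  qed
  have "m1 = m2" if m: "m1 \<in> M" "m2 \<in> M" and eq: "\<phi> m1 = \<phi> m2" for m1 m2
  proof -
    have l: "\<phi> m1 \<in> L" "carries_direction h U W1 m1 (\<phi> m1)" "carries_direction h U W1 m2 (\<phi> m1)"
      using \<phi>[OF m(1)] \<phi>[OF m(2)] eq by auto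
    note inverse = carries_direction_inverse[OF bl U(2,3) inv \<open>h ` U \<subseteq> V\<close> hW]
    show ?thesis
      using carries_direction_unique[OF bl' V(1-3) h'W L(2)[rule_format, OF l(1)]
          approx[rule_format, OF l(1)] M(2) c(2,1) near_M inverse[OF l(2)] inverse[OF l(3)] m] .
  qed
  then have "inj_on \<phi> M" by (rule inj_onI)
  moreover have "\<phi> ` M \<subseteq> L" using \<phi> by blast
  ultimately show ?thesis using L(1) by (rule card_inj_on_le)
qed


theorem proposition3p14:
  fixes W1 W2 :: "(complex^'n) set" and M L :: "(complex^'n) set set"
    and h :: "complex^'n \<Rightarrow> complex^'n"
  assumes "analytic_curve_germ_at0 W1" and "analytic_curve_germ_at0 W2"
    and "finite M" and "\<forall>m\<in>M. complex_line m" and "tangent_cone W1 = \<Union>M"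
    and "finite L" and "\<forall>l\<in>L. complex_line l" and "tangent_cone W2 = \<Union>L"
    and "bilipschitz_germ_map h U V" and "h ` (W1 \<inter> U) = W2 \<inter> V"
  shows "card M = card L"
proof -
  obtain h' where h': "bilipschitz_germ_map h' V U" "\<forall>x\<in>U. h' (h x) = x" "\<forall>y\<in>V. h (h' y) = y"
    by (rule bilipschitz_germ_map_inverse[OF assms(9)])
  have hW: "h ` (W1 \<inter> U) \<subseteq> W2" using assms(10) by blast
  have "h' ` (W2 \<inter> V) = (\<lambda>x. h' (h x)) ` (W1 \<inter> U)"
    unfolding assms(10)[symmetric] by (simp add: image_image)
  then have h'W: "h' ` (W2 \<inter> V) \<subseteq> W1" using h'(2) by auto
  have "\<forall>m\<in>M. approximates_line W1 m" "\<forall>l\<in>L. approximates_line W2 l"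
    using analytic_curve_approximates_tangent_line[OF assms(1,5,3,4)]
      analytic_curve_approximates_tangent_line[OF assms(2,8,6,7)] by blast+
  then have "card M \<le> card L" "card L \<le> card M"
    using card_tangent_lines_le[OF assms(9) h'(1,2) hW h'W assms(3-8)]
      card_tangent_lines_le[OF h'(1) assms(9) h'(3) h'W hW assms(6-8,3-5)] by blast+
  then show ?thesis by (rule antisym)
qed

end
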